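(* Let $T$ be a tree that is not a path. Then the following statements are equivalent: (i) $\gamma_M(T)=\dim(T)+\gamma(T)$; (ii) $\dim(T)=\ell'(T)-|\mathcal S'(T)|$; (iii) every exterior major vertex $u$ of $T$ with $\mathrm{ter}(u)\ge 2$ is adjacent to each of its terminal vertices; (iv) every path joining two leaves of $T$ that are at distance greater than $2$ contains at least two major vertices.
   Context: All graphs are finite, simple, undirected and connected, with at least 2 vertices; $d(u,v)$ is the shortest-path distance. A set $S\subseteq V(G)$ is a resolving set if for all $x,y\in V(G)$ with $x\ne y$ there is $u\in S$ with $d(u,x)\neq d(u,y)$; $\dim(G)$ is the minimum size of a resolving set. A set $S$ is dominating if every vertex not in $S$ has a neighbor in $S$; $\gamma(G)$ is the minimum size of a dominating set. A metric-locating-dominating set (MLD-set) is a set that is both resolving and dominating; $\gamma_M(G)$ is the minimum size of an MLD-set. In a tree $T$: a leaf is a vertex of degree 1; a support vertex is a vertex adjacent to a leaf; a strong support vertex is a vertex adjacent to at least two leaves; $\mathcal S'(T)$ is the set of strong support vertices; $\ell'(T)$ is the number of leaves adjacent to a strong support vertex. A major vertex is a vertex of degree at least 3. A leaf $x$ is a terminal vertex of a major vertex $u$ if $u$ is the major vertex closest to $x$; $\mathrm{ter}(u)$ is the number of terminal vertices of $u$; $u$ is an exterior major vertex if $\mathrm{ter}(u)\ge 1$. *)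

theory Defs
  imports Main
begin

definition graph :: "'a set \<Rightarrow> ('a \<Rightarrow> 'a \<Rightarrow> bool) \<Rightarrow> bool" where
  "graph V E \<longleftrightarrow> finite V \<and> card V \<ge> 2 \<and>
     (\<forall>x y. E x y \<longrightarrow> x \<in> V \<and> y \<in> V) \<and>
     (\<forall>x y. E x y \<longrightarrow> E y x) \<and> (\<forall>x. \<not> E x x)"

definition walk :: "'a set \<Rightarrow> ('a \<Rightarrow> 'a \<Rightarrow> bool) \<Rightarrow> 'a list \<Rightarrow> bool" where
  "walk V E p \<longleftrightarrow> p \<noteq> [] \<and> set p \<subseteq> V \<and> (\<forall>i. Suc i < length p \<longrightarrow> E (p ! i) (p ! Suc i))"

definition path_between :: "'a set \<Rightarrow> ('a \<Rightarrow> 'a \<Rightarrow> bool) \<Rightarrow> 'a \<Rightarrow> 'a \<Rightarrow> 'a list \<Rightarrow> bool" where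
  "path_between V E u v p \<longleftrightarrow> walk V E p \<and> distinct p \<and> hd p = u \<and> last p = v"

definition connected_graph :: "'a set \<Rightarrow> ('a \<Rightarrow> 'a \<Rightarrow> bool) \<Rightarrow> bool" where
  "connected_graph V E \<longleftrightarrow> graph V E \<and> (\<forall>u\<in>V. \<forall>v\<in>V. \<exists>p. path_between V E u v p)"

definition is_cycle :: "'a set \<Rightarrow> ('a \<Rightarrow> 'a \<Rightarrow> bool) \<Rightarrow> 'a list \<Rightarrow> bool" where
  "is_cycle V E c \<longleftrightarrow> walk V E c \<and> distinct c \<and> length c \<ge> 3 \<and> E (last c) (hd c)"

definition tree :: "'a set \<Rightarrow> ('a \<Rightarrow> 'a \<Rightarrow> bool) \<Rightarrow> bool" where
  "tree V E \<longleftrightarrow> connected_graph V E \<and> (\<nexists>c. is_cycle V E c)"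

definition is_path_graph :: "'a set \<Rightarrow> ('a \<Rightarrow> 'a \<Rightarrow> bool) \<Rightarrow> bool" where
  "is_path_graph V E \<longleftrightarrow> (\<exists>p. distinct p \<and> set p = V \<and>
     (\<forall>x y. E x y \<longleftrightarrow> (\<exists>i. Suc i < length p \<and>
        ((p ! i = x \<and> p ! Suc i = y) \<or> (p ! i = y \<and> p ! Suc i = x)))))"

definition dist :: "'a set \<Rightarrow> ('a \<Rightarrow> 'a \<Rightarrow> bool) \<Rightarrow> 'a \<Rightarrow> 'a \<Rightarrow> nat" where
  "dist V E u v = (LEAST n. \<exists>p. walk V E p \<and> hd p = u \<and> last p = v \<and> length p = Suc n)"

definition resolving :: "'a set \<Rightarrow> ('a \<Rightarrow> 'a \<Rightarrow> bool) \<Rightarrow> 'a set \<Rightarrow> bool" where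
  "resolving V E S \<longleftrightarrow> S \<subseteq> V \<and>
     (\<forall>x\<in>V. \<forall>y\<in>V. x \<noteq> y \<longrightarrow> (\<exists>u\<in>S. dist V E u x \<noteq> dist V E u y))"

definition dominating :: "'a set \<Rightarrow> ('a \<Rightarrow> 'a \<Rightarrow> bool) \<Rightarrow> 'a set \<Rightarrow> bool" where
  "dominating V E S \<longleftrightarrow> S \<subseteq> V \<and> (\<forall>x\<in>V - S. \<exists>u\<in>S. E x u)"

definition metric_dim :: "'a set \<Rightarrow> ('a \<Rightarrow> 'a \<Rightarrow> bool) \<Rightarrow> nat" where
  "metric_dim V E = (LEAST k. \<exists>S. resolving V E S \<and> card S = k)"

definition domination_number :: "'a set \<Rightarrow> ('a \<Rightarrow> 'a \<Rightarrow> bool) \<Rightarrow> nat" where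
  "domination_number V E = (LEAST k. \<exists>S. dominating V E S \<and> card S = k)"

definition mld_number :: "'a set \<Rightarrow> ('a \<Rightarrow> 'a \<Rightarrow> bool) \<Rightarrow> nat" where
  "mld_number V E = (LEAST k. \<exists>S. resolving V E S \<and> dominating V E S \<and> card S = k)"

definition degree :: "'a set \<Rightarrow> ('a \<Rightarrow> 'a \<Rightarrow> bool) \<Rightarrow> 'a \<Rightarrow> nat" where
  "degree V E v = card {u\<in>V. E v u}"

definition leaf :: "'a set \<Rightarrow> ('a \<Rightarrow> 'a \<Rightarrow> bool) \<Rightarrow> 'a \<Rightarrow> bool" where
  "leaf V E x \<longleftrightarrow> x \<in> V \<and> degree V E x = 1"

definition strong_support :: "'a set \<Rightarrow> ('a \<Rightarrow> 'a \<Rightarrow> bool) \<Rightarrow> 'a \<Rightarrow> bool" where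
  "strong_support V E s \<longleftrightarrow> s \<in> V \<and> card {x. leaf V E x \<and> E s x} \<ge> 2"

definition strong_supports :: "'a set \<Rightarrow> ('a \<Rightarrow> 'a \<Rightarrow> bool) \<Rightarrow> 'a set" where
  "strong_supports V E = {s. strong_support V E s}"

definition ell' :: "'a set \<Rightarrow> ('a \<Rightarrow> 'a \<Rightarrow> bool) \<Rightarrow> nat" where
  "ell' V E = card {x. leaf V E x \<and> (\<exists>s. strong_support V E s \<and> E s x)}"

definition major :: "'a set \<Rightarrow> ('a \<Rightarrow> 'a \<Rightarrow> bool) \<Rightarrow> 'a \<Rightarrow> bool" where
  "major V E v \<longleftrightarrow> v \<in> V \<and> degree V E v \<ge> 3"

definition terminal :: "'a set \<Rightarrow> ('a \<Rightarrow> 'a \<Rightarrow> bool) \<Rightarrow> 'a \<Rightarrow> 'a \<Rightarrow> bool" where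
  "terminal V E u x \<longleftrightarrow> leaf V E x \<and> major V E u \<and>
     (\<forall>w. major V E w \<and> w \<noteq> u \<longrightarrow> dist V E x u < dist V E x w)"

definition ter :: "'a set \<Rightarrow> ('a \<Rightarrow> 'a \<Rightarrow> bool) \<Rightarrow> 'a \<Rightarrow> nat" where
  "ter V E u = card {x. terminal V E u x}"

definition exterior_major :: "'a set \<Rightarrow> ('a \<Rightarrow> 'a \<Rightarrow> bool) \<Rightarrow> 'a \<Rightarrow> bool" where
  "exterior_major V E u \<longleftrightarrow> major V E u \<and> ter V E u \<ge> 1"

end

theory Submission
  imports Defs
begin

text \<open>
  In a tree that is not a path, \<open>dim(T)\<close> is the sum of \<open>ter(u) - 1\<close> over the major vertices
  \<open>u\<close>: a resolving set must meet all but one of the legs ending at each \<open>u\<close>, and taking all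
  but one terminal vertex of every \<open>u\<close> resolves the tree. Likewise \<open>\<ell>'(T) - |S'(T)|\<close> is the
  sum of (number of leaves adjacent to \<open>u\<close>) \<open>- 1\<close>, and those leaves are terminal vertices of
  \<open>u\<close>; so (ii) holds iff the two sums agree term by term, which is (iii). A path between two
  leaves contains a single major vertex exactly when both are terminal vertices of it, and at
  distance greater than 2 one of them is then not adjacent to it; this gives (iii) \<open>\<longleftrightarrow>\<close> (iv).
  Finally, an MLD-set contains all but at most one leaf at each strong support vertex, and
  trading these leaves for their supports leaves a dominating set, so \<open>\<gamma>\<^sub>M(T) \<ge> \<gamma>(T) +
  \<ell>'(T) - |S'(T)|\<close>, which under (iii) is \<open>\<gamma>(T) + dim(T)\<close>. If (iii) fails, the neighbour of a
  terminal vertex not adjacent to its major vertex lies on its leg, so a metric basis and a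
  minimum dominating set can share it, and \<open>\<gamma>\<^sub>M(T) < dim(T) + \<gamma>(T)\<close>.
\<close>

lemma card_ge_2_obtain:
  assumes "finite A" "card A \<ge> 2"
  obtains a b where "a \<in> A" "b \<in> A" "a \<noteq> b"
  using assms card_le_Suc0_iff_eq[of A] by fastforce

lemma finite_ex_arg_max:
  fixes f :: "'b \<Rightarrow> 'c::linorder"
  assumes "finite S" "S \<noteq> {}"
  shows "\<exists>x\<in>S. \<forall>y\<in>S. f y \<le> f x"
proof -
  have "Max (f ` S) \<in> f ` S" using assms by simp
  then obtain x where "x \<in> S" "f x = Max (f ` S)" by (metis imageE)
  then show ?thesis using assms by (metis Max_ge finite_imageI imageI)
qed

lemma finite_ex_arg_min:
  fixes f :: "'b \<Rightarrow> 'c::linorder"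
  assumes "finite S" "S \<noteq> {}"
  shows "\<exists>x\<in>S. \<forall>y\<in>S. f x \<le> f y"
proof -
  have "Min (f ` S) \<in> f ` S" using assms by simp
  then obtain x where "x \<in> S" "f x = Min (f ` S)" by (metis imageE)
  then show ?thesis using assms by (metis Min_le finite_imageI imageI)
qed

lemma list_ex_crossing:
  assumes "P (hd p)" "\<not> P (last p)" "p \<noteq> []"
  shows "\<exists>i. Suc i < length p \<and> P (p ! i) \<and> \<not> P (p ! Suc i)"
  using assms
proof (induction p)
  case (Cons a p)
  show ?case
  proof (cases "p = []")
    case False
    show ?thesis
    proof (cases "P (hd p)")
      case True
      then obtain i where "Suc i < length p" "P (p ! i)" "\<not> P (p ! Suc i)"
        using Cons False by auto
      then show ?thesis by (intro exI[of _ "Suc i"]) auto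
    next
      case False
      then show ?thesis using Cons.prems \<open>p \<noteq> []\<close> by (intro exI[of _ 0]) (auto simp: hd_conv_nth)
    qed
  qed (use Cons.prems in simp)
qed simp

lemma walk_iff_successively: "walk V E p \<longleftrightarrow> p \<noteq> [] \<and> set p \<subseteq> V \<and> successively E p"
  unfolding walk_def successively_conv_nth by blast

lemma walkD: "walk V E p \<Longrightarrow> p \<noteq> [] \<and> set p \<subseteq> V \<and> successively E p"
  by (simp add: walk_iff_successively)

lemma resolving_mono: "resolving V E S \<Longrightarrow> S \<subseteq> T \<Longrightarrow> T \<subseteq> V \<Longrightarrow> resolving V E T"
  unfolding resolving_def by blast

lemma dominating_mono: "dominating V E S \<Longrightarrow> S \<subseteq> T \<Longrightarrow> T \<subseteq> V \<Longrightarrow> dominating V E T"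
  unfolding dominating_def by blast

lemma dominating_V: "dominating V E V" unfolding dominating_def by blast

lemma domination_number_witness: "\<exists>D. dominating V E D \<and> card D = domination_number V E"
proof -
  have "\<exists>k D. dominating V E D \<and> card D = k" using dominating_V by blast
  then show ?thesis unfolding domination_number_def by (rule LeastI_ex)
qed

lemma domination_number_le: "dominating V E D \<Longrightarrow> domination_number V E \<le> card D"
  unfolding domination_number_def by (rule Least_le) blast

lemma mld_number_le: "resolving V E S \<Longrightarrow> dominating V E S \<Longrightarrow> mld_number V E \<le> card S"
  unfolding mld_number_def by (rule Least_le) blast

lemma metric_dim_le: "resolving V E S \<Longrightarrow> metric_dim V E \<le> card S"
  unfolding metric_dim_def by (rule Least_le) blast

section \<open>Distances in a connected graph\<close>

locale connected_graph_on =
  fixes V :: "'a set" and E :: "'a \<Rightarrow> 'a \<Rightarrow> bool"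
  assumes connected: "connected_graph V E"
begin

abbreviation d where "d \<equiv> dist V E"

lemma graph: "graph V E" using connected unfolding connected_graph_def by blast
lemma finite_V: "finite V" using graph unfolding graph_def by blast
lemma card_V_ge_2: "card V \<ge> 2" using graph unfolding graph_def by blast
lemma adj_in_V: "E x y \<Longrightarrow> x \<in> V \<and> y \<in> V" using graph unfolding graph_def by blast
lemma adj_sym: "E x y \<Longrightarrow> E y x" using graph unfolding graph_def by blast
lemma adj_irrefl: "\<not> E x x" using graph unfolding graph_def by blast
lemma adj_neq: "E x y \<Longrightarrow> x \<noteq> y" using adj_irrefl by blast
lemma path_between_exists: "u \<in> V \<Longrightarrow> v \<in> V \<Longrightarrow> \<exists>p. path_between V E u v p"
  using connected unfolding connected_graph_def by blast

lemma successively_rev_adj: "successively E (rev p) \<longleftrightarrow> successively E p"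
proof -
  have "successively (\<lambda>x y. E y x) p \<longleftrightarrow> successively E p"
    by (rule successively_cong) (auto intro: adj_sym)
  then show ?thesis by simp
qed

lemma walk_rev: "walk V E p \<Longrightarrow> walk V E (rev p)"
  unfolding walk_iff_successively using successively_rev_adj[of p] by (simp del: successively_rev)

lemma walk_append_tl:
  assumes "walk V E p" "walk V E q" "last p = hd q"
  shows "walk V E (p @ tl q)"
proof -
  obtain y q' where q: "q = y # q'" using assms(2) walkD by (cases q) auto
  have "p \<noteq> []" using assms(1) walkD by blast
  then have "successively E (p @ q')" using walkD[OF assms(1)] walkD[OF assms(2)] q assms(3)
    by (auto simp: successively_append_iff successively_Cons)
  moreover have "set (p @ q') \<subseteq> V" using walkD[OF assms(1)] walkD[OF assms(2)] q by auto
  ultimately show ?thesis using \<open>p \<noteq> []\<close> q by (simp add: walk_iff_successively)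
qed

lemma dist_walk_exists:
  assumes "u \<in> V" "v \<in> V"
  shows "\<exists>p. walk V E p \<and> hd p = u \<and> last p = v \<and> length p = Suc (d u v)"
proof -
  obtain p where "path_between V E u v p" using path_between_exists assms by blast
  then have "walk V E p \<and> hd p = u \<and> last p = v \<and> length p = Suc (length p - 1)"
    unfolding path_between_def walk_def by auto
  then have "\<exists>n p. walk V E p \<and> hd p = u \<and> last p = v \<and> length p = Suc n" by blast
  then show ?thesis unfolding dist_def by (rule LeastI_ex)
qed

lemma dist_le_walk_length:
  assumes "walk V E p" "hd p = u" "last p = v"
  shows "d u v \<le> length p - 1"
proof -
  have "p \<noteq> []" using assms walk_def by blast
  then have "walk V E p \<and> hd p = u \<and> last p = v \<and> length p = Suc (length p - 1)"
    using assms by auto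
  then show ?thesis unfolding dist_def by (intro Least_le) blast
qed

lemma dist_self: "u \<in> V \<Longrightarrow> d u u = 0"
  using dist_le_walk_length[of "[u]" u u] by (simp add: walk_def)

lemma dist_eq_0D: assumes "u \<in> V" "v \<in> V" "d u v = 0" shows "u = v"
proof -
  obtain p where "walk V E p" "hd p = u" "last p = v" "length p = Suc (d u v)"
    using dist_walk_exists assms by blast
  then show ?thesis using assms(3) by (cases p) auto
qed

lemma dist_pos: "u \<in> V \<Longrightarrow> v \<in> V \<Longrightarrow> u \<noteq> v \<Longrightarrow> d u v \<noteq> 0"
  using dist_eq_0D by blast

lemma dist_sym: assumes "u \<in> V" "v \<in> V" shows "d u v = d v u"
proof -
  have le: "d x y \<le> d y x" if xy: "x \<in> V" "y \<in> V" for x y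
  proof -
    obtain p where p: "walk V E p" "hd p = y" "last p = x" "length p = Suc (d y x)"
      using dist_walk_exists[OF xy(2,1)] by blast
    have "rev p \<noteq> []" using walkD[OF p(1)] by auto
    then have "d x y \<le> length (rev p) - 1"
      using p by (intro dist_le_walk_length walk_rev) (auto simp: hd_rev last_rev)
    then show ?thesis using p by simp
  qed
  show ?thesis using le[OF assms] le[OF assms(2,1)] by simp
qed

lemma dist_triangle: assumes "u \<in> V" "v \<in> V" "w \<in> V" shows "d u w \<le> d u v + d v w"
proof -
  obtain p where p: "walk V E p" "hd p = u" "last p = v" "length p = Suc (d u v)"
    using dist_walk_exists assms by blast
  obtain q where q: "walk V E q" "hd q = v" "last q = w" "length q = Suc (d v w)"
    using dist_walk_exists assms by blast
  have w: "walk V E (p @ tl q)" using walk_append_tl p q by auto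
  have "q \<noteq> []" "p \<noteq> []" using walkD q(1) p(1) by auto
  then have "hd (p @ tl q) = u" "last (p @ tl q) = w" using p q by (cases q; auto)+
  then have "d u w \<le> length (p @ tl q) - 1" using dist_le_walk_length w by blast
  then show ?thesis using p q by simp
qed

lemma dist_adj: assumes "E u v" shows "d u v = 1"
proof -
  have "walk V E [u, v]" using assms adj_in_V by (auto simp: walk_def nth_Cons split: nat.splits)
  then have "d u v \<le> 1" using dist_le_walk_length[of "[u,v]"] by simp
  moreover have "d u v \<noteq> 0" using dist_pos adj_in_V assms adj_neq by blast
  ultimately show ?thesis by simp
qed

lemma adj_if_dist_eq_1: assumes "u \<in> V" "v \<in> V" "d u v = 1" shows "E u v"
proof -
  obtain p where p: "walk V E p" "hd p = u" "last p = v" "length p = Suc (d u v)"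
    using dist_walk_exists assms by blast
  then obtain a b where "p = [a, b]" using assms(3) by (cases p; cases "tl p") auto
  then show ?thesis using p unfolding walk_def by auto
qed

lemma geodesic_nth:
  assumes p: "walk V E p" "hd p = u" "last p = v" "length p = Suc (d u v)"
    and i: "i < length p"
  shows "d u (p ! i) = i \<and> d (p ! i) v + i = d u v"
proof -
  have ne: "p \<noteq> []" and sV: "set p \<subseteq> V" using walkD[OF p(1)] by auto
  have V: "u \<in> V" "v \<in> V" "p ! i \<in> V" using p(2,3) ne i sV
    by (auto simp: hd_conv_nth last_conv_nth)
  have w1: "walk V E (take (Suc i) p)" using p i unfolding walk_def
    by (auto dest: in_set_takeD)
  have "hd (take (Suc i) p) = u" using p ne by (simp add: hd_take)
  moreover have "last (take (Suc i) p) = p ! i" using i ne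
    by (subst last_conv_nth) (auto simp: min_def intro: arg_cong[where f="(!) p"])
  ultimately have a: "d u (p!i) \<le> i" using dist_le_walk_length[OF w1] i by simp
  have w2: "walk V E (drop i p)" using p i unfolding walk_def
    by (auto dest: in_set_dropD)
  have "hd (drop i p) = p ! i" using i by (simp add: hd_drop_conv_nth)
  moreover have "last (drop i p) = v" using p i by simp
  ultimately have b: "d (p!i) v \<le> length p - i - 1" using dist_le_walk_length[OF w2] i by simp
  have "d u v \<le> d u (p!i) + d (p!i) v" using dist_triangle V by blast
  then show ?thesis using a b p(4) i by linarith
qed

lemma geodesic_distinct:
  assumes p: "walk V E p" "hd p = u" "last p = v" "length p = Suc (d u v)"
  shows "distinct p"
proof (rule ccontr)
  assume "\<not> distinct p"
  then obtain xs ys zs y where pe: "p = xs @ [y] @ ys @ [y] @ zs" using not_distinct_decomp by blast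
  let ?q = "xs @ [y] @ zs"
  have sp: "successively E p" "set p \<subseteq> V" using walkD[OF p(1)] by auto
  have "successively E ?q"
    using sp unfolding pe by (auto simp: successively_append_iff successively_Cons)
  moreover have "set ?q \<subseteq> V" using sp(2) pe by auto
  ultimately have "walk V E ?q" by (auto simp: walk_iff_successively)
  moreover have "hd ?q = u" using p pe by (cases xs) auto
  moreover have "last ?q = v" using p pe by (cases zs) auto
  ultimately have "d u v \<le> length ?q - 1" using dist_le_walk_length by blast
  then show False using p(4) pe by simp
qed

lemma exists_adj_closer:
  assumes "a \<in> V" "v \<in> V" "a \<noteq> v"
  shows "\<exists>n. E a n \<and> d n v + 1 = d a v"
proof -
  obtain p where p: "walk V E p" "hd p = a" "last p = v" "length p = Suc (d a v)"
    using dist_walk_exists assms by blast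
  have "d a v \<noteq> 0" using dist_pos assms by blast
  then have l: "1 < length p" using p by simp
  have "E (p!0) (p!1)" using p l unfolding walk_def by auto
  moreover have "p ! 0 = a" using p l by (cases p) auto
  moreover have "d (p!1) v + 1 = d a v" using geodesic_nth[OF p l] by simp
  ultimately show ?thesis by metis
qed

abbreviation between where "between x v y \<equiv> d x v + d v y = d x y"

lemma between_trans:
  assumes V: "x \<in> V" "v \<in> V" "u \<in> V" "y \<in> V" and "between x v u" "between x u y"
  shows "between x v y \<and> between v u y"
proof -
  have "d x y \<le> d x v + d v y" "d v y \<le> d v u + d u y" using dist_triangle V by auto
  moreover have "d x u \<le> d x v + d v u" using dist_triangle V by auto
  ultimately show ?thesis using assms by linarith
qed

lemma exists_between_at_dist:
  assumes "x \<in> V" "y \<in> V" "i \<le> d x y"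
  shows "\<exists>v\<in>V. d x v = i \<and> d v y + i = d x y"
proof -
  obtain p where p: "walk V E p" "hd p = x" "last p = y" "length p = Suc (d x y)"
    using dist_walk_exists assms by blast
  have il: "i < length p" using p assms by simp
  then have "d x (p!i) = i \<and> d (p!i) y + i = d x y" using geodesic_nth[OF p] by blast
  moreover have "p ! i \<in> V" using walkD[OF p(1)] il by auto
  ultimately show ?thesis by blast
qed

lemma resolving_V: "resolving V E V"
proof -
  have "\<exists>u\<in>V. d u x \<noteq> d u y" if "x \<in> V" "y \<in> V" "x \<noteq> y" for x y
  proof -
    have "d x x = 0" using dist_self that by simp
    moreover have "d x y \<noteq> 0" using dist_eq_0D that by blast
    ultimately show ?thesis using that by metis
  qed
  then show ?thesis unfolding resolving_def by blast
qed

lemma mld_number_witness: "\<exists>S. resolving V E S \<and> dominating V E S \<and> card S = mld_number V E"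
proof -
  have "\<exists>k S. resolving V E S \<and> dominating V E S \<and> card S = k" using dominating_V resolving_V by blast
  then show ?thesis unfolding mld_number_def by (rule LeastI_ex)
qed

lemma metric_dim_witness: "\<exists>S. resolving V E S \<and> card S = metric_dim V E"
proof -
  have "\<exists>k S. resolving V E S \<and> card S = k" using resolving_V by blast
  then show ?thesis unfolding metric_dim_def by (rule LeastI_ex)
qed

lemma mld_number_le_sum: "mld_number V E \<le> metric_dim V E + domination_number V E"
proof -
  obtain S where S: "resolving V E S" "card S = metric_dim V E" using metric_dim_witness by blast
  obtain D where D: "dominating V E D" "card D = domination_number V E" using domination_number_witness by blast
  have SV: "S \<subseteq> V" using S(1) unfolding resolving_def by blast
  have DV: "D \<subseteq> V" using D(1) unfolding dominating_def by blast
  have "resolving V E (S \<union> D)" using resolving_mono[OF S(1)] SV DV by blast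
  moreover have "dominating V E (S \<union> D)" using dominating_mono[OF D(1)] SV DV by blast
  ultimately have "mld_number V E \<le> card (S \<union> D)" using mld_number_le by blast
  also have "\<dots> \<le> card S + card D" by (rule card_Un_le)
  finally show ?thesis using S D by simp
qed

section \<open>Leaves, major vertices and terminal vertices\<close>

lemma finite_adj: "finite {u\<in>V. E v u}" using finite_V by simp

lemma degree_ge_2: assumes "E v a" "E v b" "a \<noteq> b" shows "degree V E v \<ge> 2"
proof -
  have "{a, b} \<subseteq> {u\<in>V. E v u}" using assms adj_in_V by auto
  then have "card {a,b} \<le> degree V E v" unfolding degree_def using card_mono finite_adj by blast
  then show ?thesis using assms by simp
qed

lemma degree_ge_3: assumes "E v a" "E v b" "E v c" "a \<noteq> b" "a \<noteq> c" "b \<noteq> c"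
  shows "degree V E v \<ge> 3"
proof -
  have "{a, b, c} \<subseteq> {u\<in>V. E v u}" using assms adj_in_V by auto
  then have "card {a,b,c} \<le> degree V E v" unfolding degree_def using card_mono finite_adj by blast
  then show ?thesis using assms by simp
qed

lemma leaf_adj_unique: "leaf V E x \<Longrightarrow> E x a \<Longrightarrow> E x b \<Longrightarrow> a = b"
  using degree_ge_2 unfolding leaf_def by fastforce

lemma leaf_has_adj: assumes "leaf V E x" shows "\<exists>a. E x a"
proof -
  have "card {u\<in>V. E x u} = 1" using assms unfolding leaf_def degree_def by simp
  then have "{u\<in>V. E x u} \<noteq> {}" by (metis card.empty zero_neq_one)
  then show ?thesis by blast
qed

lemma leaf_in_V: "leaf V E x \<Longrightarrow> x \<in> V" unfolding leaf_def by simp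
lemma major_in_V: "major V E x \<Longrightarrow> x \<in> V" unfolding major_def by simp

lemma leaf_not_major: "leaf V E x \<Longrightarrow> \<not> major V E x"
  unfolding leaf_def major_def by simp

lemma major_two_other_adj:
  assumes "major V E v"
  shows "\<exists>a b. E v a \<and> E v b \<and> a \<noteq> b \<and> a \<noteq> n \<and> b \<noteq> n"
proof -
  let ?N = "{u\<in>V. E v u} - {n}"
  have "card {u\<in>V. E v u} \<ge> 3" using assms unfolding major_def degree_def by simp
  moreover have "card ?N = (if n \<in> {u\<in>V. E v u} then card {u\<in>V. E v u} - 1 else card {u\<in>V. E v u})"
    by (rule card_Diff_singleton_if)
  ultimately have "card ?N \<ge> 2" by (cases "n \<in> {u\<in>V. E v u}") auto
  then obtain a b where "a \<in> ?N" "b \<in> ?N" "a \<noteq> b"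
    using card_ge_2_obtain[of ?N] finite_adj by blast
  then show ?thesis by blast
qed

lemma non_major_adj_cases:
  assumes "\<not> major V E v" "E v a" "E v b" "a \<noteq> b" "E v m"
  shows "m = a \<or> m = b"
  using degree_ge_3[of v a b m] assms adj_in_V unfolding major_def by fastforce

lemma interior_two_adj:
  assumes V: "x \<in> V" "v \<in> V" "u \<in> V" and b: "between x v u" and "v \<noteq> x" "v \<noteq> u"
  shows "\<exists>g h. E v g \<and> E v h \<and> g \<noteq> h \<and> d g x + 1 = d v x \<and> d h u + 1 = d v u"
proof -
  obtain g where g: "E v g" "d g x + 1 = d v x" using exists_adj_closer assms by blast
  obtain h where h: "E v h" "d h u + 1 = d v u" using exists_adj_closer assms by blast
  have "g \<noteq> h"
  proof
    assume "g = h"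
    have gV: "g \<in> V" using adj_in_V g by auto
    have "d x u \<le> d x g + d g u" using dist_triangle V gV by auto
    moreover have "d x g = d g x" "d x v = d v x" using dist_sym V gV by auto
    moreover have "d g u + 1 = d v u" using h \<open>g = h\<close> by simp
    ultimately show False using b g by linarith
  qed
  then show ?thesis using g h by blast
qed

text \<open>Walking away from a leaf along vertices of degree two, there is only one way to go.\<close>
lemma step_away_from_leaf:
  assumes lf: "leaf V E l" and nl: "n = l \<or> \<not> major V E n"
    and v: "E n v" "d v l = d n l + 1" and h: "E n h" "d h w + 1 = d n w"
    and w: "w \<in> V" and nw: "between l n w"
  shows "h = v"
proof (cases "n = l")
  case True
  then show ?thesis using leaf_adj_unique[OF lf] h v adj_sym by blast
next
  case False
  have lV: "l \<in> V" and nV: "n \<in> V" using lf leaf_in_V adj_in_V v by blast+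
  obtain g where g: "E n g" "d g l + 1 = d n l" using exists_adj_closer nV lV False by blast
  have gV: "g \<in> V" using adj_in_V g by auto
  have "h \<noteq> g"
  proof
    assume "h = g"
    have "d l w \<le> d l g + d g w" using dist_triangle lV gV w by auto
    moreover have "d l g = d g l" "d l n = d n l" using dist_sym lV gV nV by auto
    moreover have "d g w + 1 = d n w" using h \<open>h = g\<close> by simp
    ultimately show False using nw g by linarith
  qed
  moreover have "g \<noteq> v" using g v by auto
  ultimately show ?thesis using non_major_adj_cases[OF _ v(1) g(1) _ h(1)] nl False by blast
qed

text \<open>A geodesic from a leaf without interior major vertices is a pendant path: every
  geodesic from the leaf to a vertex off the path runs through all of it.\<close>
lemma pendant_path_between:
  assumes lf: "leaf V E l" and uV: "u \<in> V"
    and nm: "\<And>v. v \<in> V \<Longrightarrow> between l v u \<Longrightarrow> v \<noteq> u \<Longrightarrow> \<not> major V E v"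
    and wV: "w \<in> V" and wn: "\<not> (between l w u \<and> w \<noteq> u)"
  shows "v \<in> V \<Longrightarrow> between l v u \<Longrightarrow> between l v w"
proof (induction "d l v" arbitrary: v)
  case 0
  have lV: "l \<in> V" using lf leaf_in_V by blast
  then have "v = l" using dist_eq_0D 0 by auto
  then show ?case using dist_self lV by simp
next
  case (Suc k)
  have lV: "l \<in> V" using lf leaf_in_V by blast
  have vl: "v \<noteq> l" using Suc.hyps dist_self lV by auto
  obtain n where n: "E v n" "d n l + 1 = d v l" using exists_adj_closer Suc.prems lV vl by blast
  have nV: "n \<in> V" using adj_in_V n by auto
  have dsym: "d l n = d n l" "d l v = d v l" "d n u = d u n" using dist_sym lV nV Suc.prems uV by auto
  have "d l u \<le> d l n + d n u" "d n u \<le> d n v + d v u" using dist_triangle lV nV uV Suc.prems by auto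
  moreover have "d n v = 1" using dist_adj n adj_sym by auto
  ultimately have bn: "between l n u" using Suc.prems(2) n dsym by linarith
  have dln: "k = d l n" using Suc.hyps n dsym by simp
  have IH: "between l n w" using Suc.hyps(1)[OF dln nV bn] .
  have nu: "n \<noteq> u" using Suc.prems(2) dln Suc.hyps by auto
  then obtain h where h: "E n h" "d h w + 1 = d n w" using exists_adj_closer nV wV wn bn by blast
  have "h = v"
    using step_away_from_leaf[OF lf _ _ _ h wV IH] nm nV bn nu n adj_sym by auto
  then have "d v w + 1 = d n w" using h by simp
  then show ?case using IH n dsym Suc.hyps dln by linarith
qed

lemma terminalI:
  assumes lf: "leaf V E l" and mu: "major V E u"
    and nm: "\<And>v. v \<in> V \<Longrightarrow> between l v u \<Longrightarrow> v \<noteq> u \<Longrightarrow> \<not> major V E v"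
  shows "terminal V E u l"
proof -
  have uV: "u \<in> V" using mu major_in_V by blast
  have lV: "l \<in> V" using lf leaf_in_V by blast
  have "d l u < d l w" if "major V E w" "w \<noteq> u" for w
  proof -
    have wV: "w \<in> V" using that major_in_V by blast
    have "\<not> (between l w u \<and> w \<noteq> u)" using nm wV that by blast
    then have "between l u w" using pendant_path_between[OF lf uV nm wV] uV dist_self by simp
    moreover have "d u w \<noteq> 0" using dist_eq_0D uV wV that by blast
    ultimately show ?thesis by linarith
  qed
  then show ?thesis unfolding terminal_def using lf mu by blast
qed

lemma terminal_leaf: "terminal V E u x \<Longrightarrow> leaf V E x" unfolding terminal_def by blast
lemma terminal_major: "terminal V E u x \<Longrightarrow> major V E u" unfolding terminal_def by blast

lemma terminal_no_major_between:
  assumes t: "terminal V E u x" and "v \<in> V" "between x v u" "v \<noteq> u"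
  shows "\<not> major V E v"
proof
  assume m: "major V E v"
  have V: "x \<in> V" "u \<in> V" using t terminal_leaf terminal_major leaf_in_V major_in_V by blast+
  have "d x u < d x v" using t m assms(4) unfolding terminal_def by blast
  then show False using assms(3) by linarith
qed

lemma terminal_between:
  assumes t: "terminal V E u x" and "w \<in> V" "\<not> (between x w u \<and> w \<noteq> u)"
    and "v \<in> V" "between x v u"
  shows "between x v w"
proof -
  have "u \<in> V" using t terminal_major major_in_V by blast
  then show ?thesis
    using pendant_path_between[OF terminal_leaf[OF t] _ terminal_no_major_between[OF t] assms(2,3)]
      assms(4,5) by blast
qed

lemma terminal_unique: assumes "terminal V E u x" "terminal V E u' x" shows "u = u'"
proof (rule ccontr)
  assume "u \<noteq> u'"
  then have "d x u < d x u'" "d x u' < d x u" using assms unfolding terminal_def by blast+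
  then show False by simp
qed

lemma leaf_not_between_terminal:
  assumes t: "terminal V E u x" and y: "leaf V E y" "y \<noteq> x"
  shows "\<not> (between x y u \<and> y \<noteq> u)"
proof
  assume a: "between x y u \<and> y \<noteq> u"
  have V: "x \<in> V" "u \<in> V" "y \<in> V" using t y terminal_leaf terminal_major leaf_in_V major_in_V by blast+
  obtain g h where "E y g" "E y h" "g \<noteq> h" using interior_two_adj[OF V(1,3,2)] a y by blast
  then show False using leaf_adj_unique y by blast
qed

lemma terminal_between_leaves:
  assumes t: "terminal V E u x" and y: "leaf V E y" "y \<noteq> x"
  shows "between x u y"
proof -
  have V: "x \<in> V" "u \<in> V" "y \<in> V" using t y terminal_leaf terminal_major leaf_in_V major_in_V by blast+
  show ?thesis using terminal_between[OF t V(3) leaf_not_between_terminal[OF t y] V(2)] dist_self V by simp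
qed

lemma legs_disjoint:
  assumes tx: "terminal V E u x" and ty: "terminal V E u' y" and xy: "x \<noteq> y"
    and vV: "v \<in> V" and v1: "between x v u" "v \<noteq> u" and v2: "between y v u'" "v \<noteq> u'"
  shows False
proof -
  have V: "x \<in> V" "u \<in> V" "y \<in> V" "u' \<in> V"
    using tx ty terminal_leaf terminal_major leaf_in_V major_in_V by blast+
  have b1: "between x u y" using terminal_between_leaves[OF tx terminal_leaf[OF ty]] xy by blast
  have "d y u' \<le> d y u"
  proof (cases "u = u'")
    case False
    then show ?thesis using ty terminal_major[OF tx] unfolding terminal_def by fastforce
  qed simp
  moreover have "d x y \<le> d x v + d v y" using dist_triangle V vV by auto
  moreover have "d v y = d y v" "d u y = d y u" using dist_sym V vV by auto
  moreover have "d v u \<noteq> 0" "d v u' \<noteq> 0" using dist_eq_0D V vV v1 v2 by auto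
  ultimately show False using b1 v1 v2 by linarith
qed

lemma leafI:
  assumes "x \<in> V" "E x a" "\<And>b. E x b \<Longrightarrow> b = a"
  shows "leaf V E x"
proof -
  have "{u\<in>V. E x u} = {a}" using assms(2,3) adj_in_V[OF assms(2)] by blast
  then show ?thesis unfolding leaf_def degree_def using assms(1) by simp
qed

end

section \<open>Geodesics in a tree\<close>

locale tree_graph = connected_graph_on +
  assumes acyclic: "\<nexists>c. is_cycle V E c"
begin

lemma no_cycle: "\<not> is_cycle V E c" using acyclic by blast

lemma no_diverging_paths:
  assumes wP: "walk V E (a # P)" and wQ: "walk V E (a # Q)" and dP: "distinct P" and dQ: "distinct Q"
    and aP: "a \<notin> set P" and aQ: "a \<notin> set Q" and ne: "P \<noteq> []" "Q \<noteq> []"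
    and hd: "hd P \<noteq> hd Q" and la: "last P = last Q"
  shows False
proof -
  have "\<exists>z\<in>set P. z \<in> set Q" using ne la by (metis last_in_set)
  then obtain P1 z P2 where P: "P = P1 @ z # P2" "z \<in> set Q" "\<forall>y\<in>set P1. y \<notin> set Q"
    by (rule split_list_first_propE)
  obtain Q1 Q2 where Q: "Q = Q1 @ z # Q2" using P(2) split_list by metis
  text \<open>The cycle runs out along \<open>P\<close> to its first common vertex \<open>z\<close> with \<open>Q\<close>
    and back along \<open>Q\<close>.\<close>
  let ?c = "(a # P1) @ (z # rev Q1)"
  have sP: "successively E ((a # P1 @ [z]) @ P2)" "set (a # P) \<subseteq> V"
    using walkD[OF wP] P by auto
  have sQ: "successively E ((a # Q1 @ [z]) @ Q2)" "set (a # Q) \<subseteq> V"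
    using walkD[OF wQ] Q by auto
  have "successively E (a # P1 @ [z])"
    using sP(1) unfolding successively_append_iff by blast
  then have "successively E ((a # P1) @ [z])" by simp
  then have "successively E (a # P1)" "E (last (a # P1)) z"
    unfolding successively_append_iff by auto
  moreover have "successively E (a # Q1 @ [z])"
    using sQ(1) unfolding successively_append_iff by blast
  then have "successively E ((z # rev Q1) @ [a])" using successively_rev_adj by fastforce
  then have "successively E (z # rev Q1)" unfolding successively_append_iff by blast
  ultimately have "successively E ?c" unfolding successively_append_iff by auto
  moreover have "E (last ?c) (hd ?c)"
  proof -
    have "E a (hd Q)" using sQ(1) ne(2) Q by (cases Q1) auto
    then show ?thesis using Q by (cases Q1) (auto intro: adj_sym simp: last_rev)
  qed
  moreover have "distinct ?c" using dP dQ aP aQ P Q by auto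
  moreover have "length ?c \<ge> 3"
  proof (rule ccontr)
    assume "\<not> ?thesis"
    then have "P1 = []" "Q1 = []" by (auto simp: length_0_conv[symmetric] simp del: length_0_conv)
    then show False using hd P Q by simp
  qed
  moreover have "set ?c \<subseteq> V" using sP(2) sQ(2) P Q by auto
  ultimately have "is_cycle V E ?c" unfolding is_cycle_def walk_iff_successively by auto
  then show False using no_cycle by blast
qed

lemma path_between_unique:
  assumes "path_between V E x y p" "path_between V E x y q"
  shows "p = q"
  using assms
proof (induction p arbitrary: x q)
  case Nil
  then show ?case by (simp add: path_between_def walk_def)
next
  case (Cons a p')
  have wq: "walk V E q" "distinct q" "hd q = x" "last q = y"
    using Cons.prems(2)[unfolded path_between_def] by auto
  have wp: "walk V E (a # p')" "distinct (a # p')" "a = x" "last (a # p') = y"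
    using Cons.prems(1)[unfolded path_between_def] by auto
  obtain q' where q: "q = a # q'" using wq wp walkD by (cases q) auto
  consider "p' = []" | "q' = []" | "p' \<noteq> []" "q' \<noteq> []" "hd p' = hd q'"
    | "p' \<noteq> []" "q' \<noteq> []" "hd p' \<noteq> hd q'" by blast
  then show ?case
  proof cases
    case 1
    then show ?thesis using wp wq q by (cases q' rule: rev_cases) auto
  next
    case 2
    then show ?thesis using wp wq q by (cases p' rule: rev_cases) auto
  next
    case 3
    have "path_between V E (hd p') y p'" "path_between V E (hd p') y q'"
      using wp wq q 3 unfolding path_between_def walk_iff_successively
      by (auto simp: successively_Cons)
    then show ?thesis using Cons.IH q by auto
  next
    case 4
    then show ?thesis using no_diverging_paths[of a p' q'] wp wq q by auto
  qed
qed

lemma geodesic_path_exists: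
  assumes "u \<in> V" "v \<in> V"
  shows "\<exists>p. path_between V E u v p \<and> length p = Suc (d u v)"
  using dist_walk_exists[OF assms] geodesic_distinct unfolding path_between_def by blast

lemma path_between_length:
  assumes "path_between V E u v p"
  shows "length p = Suc (d u v)"
proof -
  have "u \<in> V" "v \<in> V" using assms unfolding path_between_def
    by (auto dest!: walkD intro: hd_in_set last_in_set)
  then obtain q where "path_between V E u v q" "length q = Suc (d u v)"
    using geodesic_path_exists by blast
  then show ?thesis using path_between_unique assms by blast
qed

lemma adj_not_farther_unique:
  assumes ab: "E a b" and ac: "E a c" and v: "v \<in> V"
    and db: "d b v \<le> d a v" and dc: "d c v \<le> d a v"
  shows "b = c"
proof (rule ccontr)
  assume bc: "b \<noteq> c"
  have aV: "a \<in> V" "b \<in> V" "c \<in> V" using adj_in_V ab ac by auto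
  have notin: "a \<notin> set P"
    if "walk V E P" "hd P = b" "last P = v" "length P = Suc (d b v)" "E a b" "d b v \<le> d a v" for P b
  proof
    assume "a \<in> set P"
    then obtain i where i: "i < length P" "P ! i = a" by (auto simp: in_set_conv_nth)
    have "d (P!i) v + i = d b v" using geodesic_nth[OF that(1-4) i(1)] by simp
    moreover have "i \<noteq> 0" using i that(2,5) adj_neq
      by (metis hd_conv_nth length_greater_0_conv list.size(3) not_less0)
    ultimately show False using i(2) that(6) by simp
  qed
  obtain P where P: "walk V E P" "hd P = b" "last P = v" "length P = Suc (d b v)"
    using dist_walk_exists aV v by blast
  obtain Q where Q: "walk V E Q" "hd Q = c" "last Q = v" "length Q = Suc (d c v)"
    using dist_walk_exists aV v by blast
  have neP: "P \<noteq> []" "Q \<noteq> []" using walkD P(1) Q(1) by auto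
  have "walk V E (a # P)" using P(1,2) ab aV neP unfolding walk_iff_successively
    by (cases P) (auto simp: successively_Cons)
  moreover have "walk V E (a # Q)" using Q(1,2) ac aV neP unfolding walk_iff_successively
    by (cases Q) (auto simp: successively_Cons)
  moreover have "distinct P" "distinct Q" using geodesic_distinct P Q by blast+
  ultimately show False
    using no_diverging_paths[of a P Q] notin[OF P ab db] notin[OF Q ac dc] neP P Q bc by auto
qed

lemma dist_adj_cases:
  assumes "E a w" "v \<in> V"
  shows "d w v = d a v + 1 \<or> d a v = d w v + 1"
proof -
  have V: "a \<in> V" "w \<in> V" using adj_in_V assms by auto
  show ?thesis
  proof (cases "a = v")
    case True
    then show ?thesis using dist_adj assms dist_self V adj_sym by auto
  next
    case False
    then obtain n where n: "E a n" "d n v + 1 = d a v" using exists_adj_closer V assms by blast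
    show ?thesis
    proof (cases "d w v \<le> d a v")
      case True
      then have "w = n" using adj_not_farther_unique[OF assms(1) n(1) assms(2)] n by linarith
      then show ?thesis using n by simp
    next
      case False
      have "d w v \<le> d w a + d a v" using dist_triangle V assms by auto
      moreover have "d w a = 1" using dist_adj assms adj_sym by auto
      ultimately show ?thesis using False by linarith
    qed
  qed
qed

lemma dist_to_adj_cases:
  assumes "E a b" "v \<in> V"
  shows "d v b = d v a + 1 \<or> d v a = d v b + 1"
  using dist_adj_cases[OF assms] dist_sym adj_in_V assms by metis

lemma adj_closer_unique:
  assumes "E a b" "E a c" "v \<in> V" "d b v < d a v" "d c v < d a v"
  shows "b = c"
  using adj_not_farther_unique assms by simp

text \<open>The edge \<open>a b\<close> separates the vertices closer to \<open>a\<close> from those closer to \<open>b\<close>.\<close>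
lemma dist_across_edge:
  assumes ab: "E a b" and V: "v \<in> V" "z \<in> V"
    and hv: "d v b = d v a + 1" and hz: "d z a = d z b + 1"
  shows "d v z = d v a + 1 + d b z"
proof -
  have aV: "a \<in> V" "b \<in> V" using adj_in_V ab by auto
  obtain P where P: "walk V E P" "hd P = v" "last P = a" "length P = Suc (d v a)"
    using dist_walk_exists aV V by blast
  obtain Q where Q: "walk V E Q" "hd Q = b" "last Q = z" "length Q = Suc (d b z)"
    using dist_walk_exists aV V by blast
  have neP: "P \<noteq> []" "Q \<noteq> []" using walkD P(1) Q(1) by auto
  have dP: "distinct P" "distinct Q" using geodesic_distinct P Q by blast+
  have disj: "set P \<inter> set Q = {}"
  proof (rule ccontr)
    assume "set P \<inter> set Q \<noteq> {}"
    then obtain w where w: "w \<in> set P" "w \<in> set Q" by blast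
    obtain i where i: "i < length P" "P ! i = w" using w by (auto simp: in_set_conv_nth)
    obtain j where j: "j < length Q" "Q ! j = w" using w by (auto simp: in_set_conv_nth)
    have pi: "d v w = i" "d w a + i = d v a" using geodesic_nth[OF P i(1)] i by auto
    have pj: "d b w = j" "d w z + j = d b z" using geodesic_nth[OF Q j(1)] j by auto
    have wV: "w \<in> V" using walkD P(1) w by auto
    have "d v b \<le> d v w + d w b" "d w b \<le> d w a + d a b" "d z a \<le> d z w + d w a"
      using dist_triangle V aV wV by auto
    moreover have "d a b = 1" using dist_adj ab by simp
    moreover have "d w b = d b w" "d z w = d w z" "d z b = d b z" using dist_sym aV wV V by auto
    ultimately show False using pi pj hv hz by linarith
  qed
  have "successively E (P @ Q)" using walkD[OF P(1)] walkD[OF Q(1)] P(3) Q(2) ab neP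
    by (auto simp: successively_append_iff)
  moreover have "set (P @ Q) \<subseteq> V" using walkD[OF P(1)] walkD[OF Q(1)] by auto
  ultimately have "path_between V E v z (P @ Q)"
    unfolding path_between_def walk_iff_successively using neP P Q dP disj by auto
  then have "length (P @ Q) = Suc (d v z)" using path_between_length by blast
  then show ?thesis using P Q by simp
qed

lemma between_in_walk:
  assumes p: "walk V E p" "hd p = x" "last p = y" and v: "v \<in> V" "between x v y"
  shows "v \<in> set p"
proof -
  have ne: "p \<noteq> []" using walkD p by auto
  have V: "x \<in> V" "y \<in> V" using walkD[OF p(1)] p ne by auto
  show ?thesis
  proof (cases "v = y")
    case True then show ?thesis using p ne by auto
  next
    case False
    obtain b where b: "E v b" "d b y + 1 = d v y" using exists_adj_closer v V False by blast
    have bV: "b \<in> V" using adj_in_V b by auto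
    let ?P = "\<lambda>w. d w b = d w v + 1"
    have "d x b \<le> d x v + d v b" "d x y \<le> d x b + d b y" using dist_triangle V v bV by auto
    moreover have "d v b = 1" using dist_adj b by simp
    ultimately have Px: "?P x" using v b by linarith
    have "d y b = d b y" "d y v = d v y" using dist_sym V v bV by auto
    then have nPy: "\<not> ?P y" using b by linarith
    obtain i where i: "Suc i < length p" "?P (p ! i)" "\<not> ?P (p ! Suc i)"
      using list_ex_crossing[of ?P p] Px nPy p ne by auto
    have ac: "E (p ! i) (p ! Suc i)" using p(1) i(1) unfolding walk_def by blast
    have acV: "p ! i \<in> V" "p ! Suc i \<in> V" using adj_in_V ac by auto
    have "d (p ! Suc i) v = d (p ! Suc i) b + 1"
      using dist_adj_cases[OF b(1) acV(2)] i(3) dist_sym acV v bV by auto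
    then have "d (p!i) (p ! Suc i) = d (p!i) v + 1 + d b (p ! Suc i)"
      using dist_across_edge[OF b(1) acV(1) acV(2)] i(2) by blast
    moreover have "d (p!i) (p ! Suc i) = 1" using dist_adj ac by simp
    ultimately have "d (p!i) v = 0" by simp
    then have "p ! i = v" using dist_eq_0D acV v by blast
    then show ?thesis using i(1) by (metis Suc_lessD nth_mem)
  qed
qed

lemma set_path_between:
  assumes p: "path_between V E x y p"
  shows "set p = {v\<in>V. between x v y}"
proof
  have pl: "length p = Suc (d x y)" using path_between_length p by blast
  have w: "walk V E p" "hd p = x" "last p = y" using p[unfolded path_between_def] by auto
  show "set p \<subseteq> {v\<in>V. between x v y}"
  proof
    fix v assume "v \<in> set p"
    then obtain i where i: "i < length p" "p ! i = v" by (auto simp: in_set_conv_nth)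
    have "d x v = i \<and> d v y + i = d x y" using geodesic_nth[OF w pl i(1)] i(2) by simp
    moreover have "v \<in> V" using walkD[OF w(1)] \<open>v \<in> set p\<close> by blast
    ultimately show "v \<in> {v\<in>V. between x v y}" by simp
  qed
  show "{v\<in>V. between x v y} \<subseteq> set p"
  proof
    fix v assume "v \<in> {v\<in>V. between x v y}"
    then show "v \<in> set p" using between_in_walk[OF w] by simp
  qed
qed

section \<open>Trees without major vertices\<close>

lemma leaf_if_diametral:
  assumes max: "\<And>a b. a \<in> V \<Longrightarrow> b \<in> V \<Longrightarrow> d a b \<le> d l z"
    and V: "l \<in> V" "z \<in> V" and lo: "l \<noteq> z"
  shows "leaf V E l"
proof -
  obtain n where n: "E l n" "d n z + 1 = d l z" using exists_adj_closer V lo by blast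
  have "b = n" if "E l b" for b
  proof -
    have "b \<in> V" using adj_in_V that by auto
    then have "d b z < d l z" using max dist_adj_cases[OF that V(2)] V by fastforce
    then show ?thesis using adj_closer_unique[OF that n(1) V(2)] n by linarith
  qed
  then show ?thesis using leafI V(1) n(1) by blast
qed

lemma path_graph_if_geodesic_spans:
  assumes p: "walk V E p" "hd p = x" "last p = y" "length p = Suc (d x y)" and sp: "set p = V"
  shows "is_path_graph V E"
proof -
  have V: "x \<in> V" "y \<in> V" using p sp walkD[OF p(1)] by auto
  have pos: "d x (p ! i) = i" if "i < length p" for i using geodesic_nth[OF p that] by blast
  have "E a b \<longleftrightarrow> (\<exists>i. Suc i < length p \<and> ((p ! i = a \<and> p ! Suc i = b) \<or> (p ! i = b \<and> p ! Suc i = a)))"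
    for a b
  proof
    assume ab: "E a b"
    have abV: "a \<in> V" "b \<in> V" using adj_in_V ab by auto
    obtain i where i: "i < length p" "p ! i = a" using abV(1) sp by (metis in_set_conv_nth)
    obtain j where j: "j < length p" "p ! j = b" using abV(2) sp by (metis in_set_conv_nth)
    have "d b x = d a x + 1 \<or> d a x = d b x + 1" using dist_adj_cases ab V by blast
    moreover have "d a x = d x a" "d b x = d x b" using dist_sym V abV by auto
    ultimately have "j = Suc i \<or> i = Suc j" using pos i j by auto
    then show "\<exists>i. Suc i < length p \<and> ((p ! i = a \<and> p ! Suc i = b) \<or> (p ! i = b \<and> p ! Suc i = a))"
      using i j by auto
  next
    assume "\<exists>i. Suc i < length p \<and> ((p ! i = a \<and> p ! Suc i = b) \<or> (p ! i = b \<and> p ! Suc i = a))"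
    then obtain i where i: "Suc i < length p" "(p ! i = a \<and> p ! Suc i = b) \<or> (p ! i = b \<and> p ! Suc i = a)"
      by blast
    have "E (p ! i) (p ! Suc i)" using p(1) i(1) unfolding walk_def by blast
    then show "E a b" using i(2) adj_sym by blast
  qed
  then show ?thesis unfolding is_path_graph_def using geodesic_distinct[OF p] sp by blast
qed

text \<open>Without major vertices, every vertex lies on a geodesic between a diametral pair of
  leaves, which therefore spans the tree.\<close>
lemma path_graph_if_no_major:
  assumes nm: "\<And>v. \<not> major V E v"
  shows "is_path_graph V E"
proof -
  obtain xy where xy: "xy \<in> V \<times> V" "\<forall>z\<in>V \<times> V. d (fst z) (snd z) \<le> d (fst xy) (snd xy)"
    using finite_ex_arg_max[of "V \<times> V" "\<lambda>z. d (fst z) (snd z)"] finite_V card_V_ge_2 by fastforce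
  obtain x y where xyd: "xy = (x, y)" by (cases xy)
  have V: "x \<in> V" "y \<in> V" using xy(1) xyd by auto
  have max: "d a b \<le> d x y" if "a \<in> V" "b \<in> V" for a b
    using xy(2) that xyd by fastforce
  have "x \<noteq> y"
  proof
    assume "x = y"
    then have "a = b" if "a \<in> V" "b \<in> V" for a b
      using max[OF that] dist_self dist_eq_0D V that by fastforce
    then have "card V \<le> 1" using card_le_Suc0_iff_eq[OF finite_V] by auto
    then show False using card_V_ge_2 by simp
  qed
  then have lx: "leaf V E x" using leaf_if_diametral max V by blast
  have all_between: "between x w y" if wV: "w \<in> V" for w
  proof (rule ccontr)
    assume nb: "\<not> between x w y"
    have "between x y w"
      using pendant_path_between[OF lx V(2) _ wV] nm nb V(2) dist_self by simp
    moreover have "d x w \<le> d x y" using max V wV by blast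
    ultimately have "w = y" using dist_eq_0D V wV by fastforce
    then show False using nb dist_self V by simp
  qed
  obtain p where p: "walk V E p" "hd p = x" "last p = y" "length p = Suc (d x y)"
    using dist_walk_exists V by blast
  have "set p = V" using walkD[OF p(1)] between_in_walk[OF p(1-3)] all_between by blast
  then show ?thesis using path_graph_if_geodesic_spans[OF p] by blast
qed

lemma exists_major: "\<not> is_path_graph V E \<Longrightarrow> \<exists>u. major V E u"
  using path_graph_if_no_major by blast

lemma exists_terminal:
  assumes lf: "leaf V E x" and ex: "\<exists>u. major V E u"
  shows "\<exists>u. terminal V E u x"
proof -
  let ?M = "{u. major V E u}"
  have "finite ?M" using finite_V major_in_V by (metis mem_Collect_eq rev_finite_subset subsetI)
  then obtain u where u: "u \<in> ?M" "\<forall>w\<in>?M. d x u \<le> d x w"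
    using finite_ex_arg_min[of ?M "d x"] ex by blast
  have "\<not> major V E v" if "v \<in> V" "between x v u" "v \<noteq> u" for v
  proof
    assume "major V E v"
    then have "d x u \<le> d x v" using u by blast
    moreover have "d v u \<noteq> 0" using dist_pos that u major_in_V by blast
    ultimately show False using that by linarith
  qed
  then show ?thesis using terminalI[OF lf] u by blast
qed

lemma nonmajor_strong_support_star:
  assumes "leaf V E l1" "E s l1" "leaf V E l2" "E s l2" "l1 \<noteq> l2" "\<not> major V E s"
  shows "V \<subseteq> {s, l1, l2}"
proof
  fix v assume vV: "v \<in> V"
  have sV: "s \<in> V" using assms adj_in_V by blast
  show "v \<in> {s, l1, l2}"
  proof (rule ccontr)
    assume nv: "v \<notin> {s, l1, l2}"
    have "s \<noteq> v" using nv by blast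
    then obtain n where n: "E s n" "d n v + 1 = d s v" using exists_adj_closer[OF sV vV] by blast
    have "n = l1 \<or> n = l2" using non_major_adj_cases[OF assms(6,2,4,5) n(1)] .
    then have ln: "leaf V E n" "n \<noteq> v" using assms nv by auto
    have "n \<in> V" using adj_in_V n(1) by blast
    then obtain h where h: "E n h" "d h v + 1 = d n v"
      using exists_adj_closer[OF _ vV ln(2)] by blast
    have "h = s" using leaf_adj_unique[OF ln(1) h(1)] n(1) adj_sym by blast
    then show False using h n by simp
  qed
qed

lemma strong_support_major:
  assumes ss: "strong_support V E s" and np: "\<not> is_path_graph V E"
  shows "major V E s"
proof (rule ccontr)
  assume nms: "\<not> major V E s"
  let ?L = "{x. leaf V E x \<and> E s x}"
  have "?L \<subseteq> V" using leaf_in_V by blast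
  then have "finite ?L" using finite_subset finite_V by blast
  moreover have "card ?L \<ge> 2" using ss unfolding strong_support_def by blast
  ultimately obtain l1 l2 where "l1 \<in> ?L" "l2 \<in> ?L" "l1 \<noteq> l2" by (rule card_ge_2_obtain)
  then have Vsub: "V \<subseteq> {s, l1, l2}" using nonmajor_strong_support_star nms by simp
  have "\<not> major V E v" for v
  proof
    assume m: "major V E v"
    have "{u\<in>V. E v u} \<subseteq> {s, l1, l2} - {v}" using Vsub adj_irrefl by blast
    then have "degree V E v \<le> card ({s, l1, l2} - {v})" unfolding degree_def
      by (intro card_mono) auto
    also have "\<dots> \<le> 2"
    proof -
      have "v \<in> {s, l1, l2}" using m major_in_V Vsub by blast
      moreover have "card {s, l1, l2} \<le> 3" by (simp add: card_insert_le_m1)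
      ultimately show ?thesis by (simp add: card_Diff_singleton)
    qed
    finally show False using m unfolding major_def by simp
  qed
  then show False using path_graph_if_no_major np by blast
qed

section \<open>The metric dimension\<close>

definition leg where "leg x u = {v\<in>V. between x v u \<and> v \<noteq> u}"

lemma leg_iff: "v \<in> leg x u \<longleftrightarrow> v \<in> V \<and> between x v u \<and> v \<noteq> u"
  unfolding leg_def by simp

lemma leaf_in_leg: assumes "terminal V E u x" shows "x \<in> leg x u"
proof -
  have "x \<in> V" "u \<in> V" using assms terminal_leaf terminal_major leaf_in_V major_in_V by blast+
  moreover have "x \<noteq> u" using assms terminal_leaf terminal_major leaf_not_major by blast
  ultimately show ?thesis unfolding leg_def using dist_self by simp
qed

lemma exists_adj_in_leg:
  assumes tz: "terminal V E u z"
  shows "\<exists>a. E u a \<and> a \<in> leg z u \<and> (\<forall>w\<in>V - leg z u. d a w = d u w + 1)"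
proof -
  have V: "z \<in> V" "u \<in> V" using tz terminal_leaf terminal_major leaf_in_V major_in_V by blast+
  have uz: "u \<noteq> z" using tz terminal_leaf terminal_major leaf_not_major by blast
  obtain a where a: "E u a" "d a z + 1 = d u z" using exists_adj_closer[OF V(2,1) uz] by blast
  have aV: "a \<in> V" using adj_in_V a by auto
  have "d z a = d a z" "d z u = d u z" using dist_sym aV V by auto
  moreover have au1: "d a u = 1" using dist_adj a adj_sym by auto
  ultimately have ba: "between z a u" using a by linarith
  have "a \<noteq> u" using a adj_neq by auto
  then have "a \<in> leg z u" using ba aV leg_iff by blast
  moreover have "d a w = d u w + 1" if w: "w \<in> V - leg z u" for w
  proof -
    have nw: "\<not> (between z w u \<and> w \<noteq> u)" using w leg_iff by blast
    have "between z a w" using terminal_between[OF tz _ nw aV ba] w by blast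
    moreover have "between z u w" using terminal_between[OF tz _ nw V(2)] w dist_self V by simp
    ultimately show ?thesis using ba au1 by linarith
  qed
  ultimately show ?thesis using a by blast
qed

text \<open>Two terminal vertices of the same major vertex are only distinguished by vertices of
  their legs.\<close>
lemma resolving_meets_leg:
  assumes res: "resolving V E W" and tx: "terminal V E u x" and ty: "terminal V E u y"
    and xy: "x \<noteq> y"
  shows "leg x u \<inter> W \<noteq> {} \<or> leg y u \<inter> W \<noteq> {}"
proof (rule ccontr)
  assume "\<not> ?thesis"
  then have ex: "W \<subseteq> V - leg x u" and ey: "W \<subseteq> V - leg y u"
    using res unfolding resolving_def by auto
  obtain a where a: "E u a" "a \<in> leg x u" "\<forall>w\<in>V - leg x u. d a w = d u w + 1"
    using exists_adj_in_leg[OF tx] by blast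
  obtain b where b: "E u b" "b \<in> leg y u" "\<forall>w\<in>V - leg y u. d b w = d u w + 1"
    using exists_adj_in_leg[OF ty] by blast
  have "a \<noteq> b" using a(2) b(2) legs_disjoint[OF tx ty xy, of a] unfolding leg_iff by blast
  moreover have abV: "a \<in> V" "b \<in> V" using adj_in_V a b by auto
  ultimately obtain w where w: "w \<in> W" "d w a \<noteq> d w b" using res unfolding resolving_def by blast
  then have "w \<in> V - leg x u" "w \<in> V - leg y u" using ex ey by blast+
  then have "d a w = d u w + 1" "d b w = d u w + 1" using a(3) b(3) by blast+
  then show False using w abV dist_sym \<open>w \<in> V - leg x u\<close> by simp
qed

abbreviation majors where "majors \<equiv> {u. major V E u}"
abbreviation terminals where "terminals u \<equiv> {x. terminal V E u x}"

text \<open>The metric dimension of a tree (which is not a path) is the sum of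
  \<open>ter(u) - 1\<close> over its exterior major vertices.\<close>
definition terminal_excess where "terminal_excess = (\<Sum>u\<in>majors. ter V E u - 1)"

lemma finite_majors: "finite majors"
  by (rule finite_subset[OF _ finite_V]) (auto dest: major_in_V)

lemma finite_terminals: "finite (terminals u)"
  by (rule finite_subset[OF _ finite_V]) (auto dest: terminal_leaf leaf_in_V)

lemma ter_le_terminals_meeting:
  assumes res: "resolving V E W"
  shows "ter V E u - 1 \<le> card {x\<in>terminals u. leg x u \<inter> W \<noteq> {}}"
proof -
  let ?F = "{x\<in>terminals u. leg x u \<inter> W \<noteq> {}}"
  have "card (terminals u - ?F) \<le> 1"
  proof (rule ccontr)
    assume "\<not> ?thesis"
    then have c2: "card (terminals u - ?F) \<ge> 2" by simp
    obtain x y where xy: "x \<in> terminals u - ?F" "y \<in> terminals u - ?F" "x \<noteq> y"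
      using card_ge_2_obtain[OF _ c2] finite_terminals by blast
    then have "terminal V E u x" "terminal V E u y" "leg x u \<inter> W = {}" "leg y u \<inter> W = {}"
      by auto
    then show False using resolving_meets_leg[OF res _ _ xy(3)] by blast
  qed
  moreover have "card (terminals u) = card ((terminals u - ?F) \<union> ?F)"
    by (rule arg_cong[where f = card]) blast
  then have "card (terminals u) \<le> card (terminals u - ?F) + card ?F"
    using card_Un_le[of "terminals u - ?F" ?F] by linarith
  ultimately show ?thesis unfolding ter_def by linarith
qed

text \<open>Legs of distinct leaves are disjoint, so a set meets at most \<open>card W\<close> of them.\<close>
lemma card_legs_meeting_le:
  assumes "finite W"
  shows "card {x. \<exists>u. terminal V E u x \<and> leg x u \<inter> W \<noteq> {}} \<le> card W"
proof -
  let ?U = "{x. \<exists>u. terminal V E u x \<and> leg x u \<inter> W \<noteq> {}}"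
  define g where "g x = (SOME w. w \<in> W \<and> (\<exists>u. terminal V E u x \<and> w \<in> leg x u))" for x
  have g: "g x \<in> W \<and> (\<exists>u. terminal V E u x \<and> g x \<in> leg x u)" if "x \<in> ?U" for x
  proof -
    have "\<exists>w. w \<in> W \<and> (\<exists>u. terminal V E u x \<and> w \<in> leg x u)" using that by blast
    then show ?thesis unfolding g_def by (rule someI_ex)
  qed
  have "inj_on g ?U"
  proof
    fix x y assume xU: "x \<in> ?U" and yU: "y \<in> ?U" and e: "g x = g y"
    obtain u where u: "terminal V E u x" "g x \<in> leg x u" using g[OF xU] by blast
    obtain u' where u': "terminal V E u' y" "g x \<in> leg y u'" using g[OF yU] e by auto
    show "x = y"
    proof (rule ccontr)
      assume "x \<noteq> y"
      then show False using legs_disjoint[OF u(1) u'(1) _, of "g x"] u(2) u'(2) unfolding leg_iff by blast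
    qed
  qed
  moreover have "g ` ?U \<subseteq> W" using g by blast
  ultimately show ?thesis using card_inj_on_le assms by blast
qed

lemma terminal_excess_le_resolving:
  assumes res: "resolving V E W"
  shows "terminal_excess \<le> card W"
proof -
  define F where "F u = {x\<in>terminals u. leg x u \<inter> W \<noteq> {}}" for u
  have disj: "\<forall>u\<in>majors. \<forall>u'\<in>majors. u \<noteq> u' \<longrightarrow> F u \<inter> F u' = {}"
    unfolding F_def using terminal_unique by blast
  have finF: "\<forall>u\<in>majors. finite (F u)" unfolding F_def using finite_terminals by simp
  have finW: "finite W" using res finite_subset[OF _ finite_V] unfolding resolving_def by blast
  have "terminal_excess \<le> (\<Sum>u\<in>majors. card (F u))"
    unfolding terminal_excess_def F_def by (intro sum_mono ter_le_terminals_meeting[OF res])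
  also have "\<dots> = card (\<Union>u\<in>majors. F u)" using card_UN_disjoint[OF finite_majors finF disj] ..
  also have "\<dots> \<le> card {x. \<exists>u. terminal V E u x \<and> leg x u \<inter> W \<noteq> {}}"
  proof (rule card_mono)
    show "finite {x. \<exists>u. terminal V E u x \<and> leg x u \<inter> W \<noteq> {}}"
      by (rule finite_subset[OF _ finite_V]) (auto dest: terminal_leaf leaf_in_V)
  qed (auto simp: F_def)
  also have "\<dots> \<le> card W" using card_legs_meeting_le[OF finW] .
  finally show ?thesis .
qed

text \<open>The side of \<open>a\<close> of an edge \<open>a b\<close>: the component of \<open>a\<close> once the edge is removed.\<close>
definition side where "side a b = {v\<in>V. d v b = d v a + 1}"

lemma side_cases:
  assumes "E a b" "v \<in> V"
  shows "v \<in> side a b \<or> v \<in> side b a"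
  using dist_to_adj_cases[OF assms] assms(2) unfolding side_def by blast

lemma dist_across_side:
  assumes "E a b" "v \<in> side a b" "z \<in> side b a"
  shows "d v z = d v a + 1 + d b z"
  using dist_across_edge assms unfolding side_def by blast

lemma closer_across_side:
  assumes ab: "E a b" and v: "v \<in> side a b" and y: "y \<in> side b a" and x: "x \<in> V"
    and le: "d a x \<le> d b y"
  shows "d v x < d v y"
proof -
  have "v \<in> V" "a \<in> V" using v ab adj_in_V unfolding side_def by auto
  then have "d v x \<le> d v a + d a x" using dist_triangle x by blast
  then show ?thesis using dist_across_side[OF ab v y] le by linarith
qed

lemma exists_leaf_beyond:
  assumes bV: "b \<in> V" and v0: "v0 \<in> V" "v0 \<noteq> b"
  shows "\<exists>l. l \<in> V \<and> between b v0 l \<and> leaf V E l"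
proof -
  let ?S = "{z\<in>V. between b v0 z}"
  have "finite ?S" "v0 \<in> ?S" using finite_V v0 dist_self by auto
  then obtain l where l: "l \<in> ?S" "\<forall>z\<in>?S. d b z \<le> d b l"
    using finite_ex_arg_max[of ?S "d b"] by blast
  have lV: "l \<in> V" and bl: "between b v0 l" using l(1) by auto
  have "d b v0 \<noteq> 0" using dist_pos bV v0 by metis
  then have lb: "l \<noteq> b" using bl dist_self bV by auto
  obtain t where t: "E l t" "d t b + 1 = d l b" using exists_adj_closer[OF lV bV lb] by blast
  have "z = t" if lz: "E l z" for z
  proof -
    have zV: "z \<in> V" using adj_in_V lz by auto
    have "\<not> d z b = d l b + 1"
    proof
      assume zb: "d z b = d l b + 1"
      have "d v0 z \<le> d v0 l + d l z" "d b z \<le> d b v0 + d v0 z" using dist_triangle v0 lV zV bV by auto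
      moreover have "d l z = 1" using dist_adj lz by simp
      moreover have "d z b = d b z" "d l b = d b l" using dist_sym zV lV bV by auto
      ultimately have "between b v0 z" using zb bl by linarith
      then have "d b z \<le> d b l" using l(2) zV by blast
      then show False using zb \<open>d z b = d b z\<close> \<open>d l b = d b l\<close> by linarith
    qed
    then have "d z b < d l b" using dist_adj_cases lz bV by fastforce
    moreover have "d t b < d l b" using t by linarith
    ultimately show ?thesis using adj_closer_unique[OF lz t(1) bV] by blast
  qed
  then have "leaf V E l" using leafI[OF lV t(1)] by blast
  then show ?thesis using lV bl by blast
qed

lemma farthest_major_branch_terminal:
  assumes ab: "E a b" and mu: "major V E u" and u: "u \<in> side a b"
    and far: "\<And>z. major V E z \<Longrightarrow> z \<in> side a b \<Longrightarrow> d z b \<le> d u b"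
    and un: "E u n" and nb: "d n b = d u b + 1"
  shows "\<exists>l. terminal V E u l \<and> d n l + 1 = d u l \<and> leg l u \<subseteq> side a b"
proof -
  have abV: "a \<in> V" "b \<in> V" and nV: "n \<in> V" and uV: "u \<in> V" and hu: "d u b = d u a + 1"
    using adj_in_V ab un u unfolding side_def by auto
  have dun: "d u n = 1" using dist_adj un by simp
  have "d b u = d u b" "d b n = d n b" using dist_sym uV nV abV by auto
  then have bun: "between b u n" using nb dun by linarith
  have "n \<noteq> b" using nb dist_self abV by auto
  then obtain l where l: "l \<in> V" "between b n l" "leaf V E l"
    using exists_leaf_beyond[OF abV(2) nV] by blast
  have bul: "between b u l \<and> between u n l" using between_trans[OF abV(2) uV nV l(1) bun l(2)] .
  have "d l u = d u l" "d u b = d b u" "d l b = d b l" using dist_sym l(1) uV abV by auto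
  then have lub: "between l u b" using bul by linarith
  have inner: "v \<in> side a b \<and> d u b < d v b" if v: "v \<in> V" "between l v u" "v \<noteq> u" for v
  proof -
    have "between l v b \<and> between v u b" using between_trans[OF l(1) v(1) uV abV(2) v(2) lub] .
    moreover have "d v u \<noteq> 0" using dist_pos v uV by blast
    moreover have "d v a \<le> d v u + d u a" using dist_triangle v uV abV by auto
    ultimately have "d v a < d v b" "d u b < d v b" using hu by linarith+
    then show ?thesis using dist_to_adj_cases[OF ab v(1)] v(1) unfolding side_def by auto
  qed
  have "\<not> major V E v" if "v \<in> V" "between l v u" "v \<noteq> u" for v
    using far inner[OF that] by fastforce
  then have "terminal V E u l" using terminalI[OF l(3) mu] by blast
  moreover have "leg l u \<subseteq> side a b" using inner by (auto simp: leg_iff)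
  moreover have "d n l + 1 = d u l" using bul dun by linarith
  ultimately show ?thesis by blast
qed

definition covers_legs where
  "covers_legs W \<longleftrightarrow> W \<subseteq> V \<and> (\<forall>u x y. terminal V E u x \<and> terminal V E u y \<and> x \<noteq> y \<longrightarrow>
      leg x u \<inter> W \<noteq> {} \<or> leg y u \<inter> W \<noteq> {})"

text \<open>Two branches at a farthest major vertex on that side would give two terminal
  vertices whose legs both miss \<open>W\<close>.\<close>
lemma no_major_on_side_if_covered:
  assumes ab: "E a b" and g: "covers_legs W" and nW: "W \<inter> side a b = {}"
  shows "majors \<inter> side a b = {}"
proof (rule ccontr)
  assume "majors \<inter> side a b \<noteq> {}"
  moreover have "finite (majors \<inter> side a b)" using finite_majors by simp
  ultimately obtain u where u: "major V E u" "u \<in> side a b"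
    and far: "\<And>z. major V E z \<Longrightarrow> z \<in> side a b \<Longrightarrow> d z b \<le> d u b"
    using finite_ex_arg_max[of "majors \<inter> side a b" "\<lambda>z. d z b"] by blast
  have abV: "a \<in> V" "b \<in> V" and uV: "u \<in> V" using adj_in_V ab u(2) unfolding side_def by auto
  have "u \<noteq> b" using u(2) dist_self abV unfolding side_def by auto
  then obtain t where t: "E u t" "d t b + 1 = d u b" using exists_adj_closer[OF uV abV(2)] by blast
  have branch: "\<exists>l. terminal V E u l \<and> d n l + 1 = d u l \<and> leg l u \<inter> W = {}"
    if un: "E u n" "n \<noteq> t" for n
  proof -
    have "d n b = d u b + 1"
      using dist_adj_cases[OF un(1) abV(2)] adj_closer_unique[OF un(1) t(1) abV(2)] t un(2) by force
    then show ?thesis using farthest_major_branch_terminal[OF ab u far un(1)] nW by blast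
  qed
  obtain n1 n2 where n: "E u n1" "E u n2" "n1 \<noteq> n2" "n1 \<noteq> t" "n2 \<noteq> t"
    using major_two_other_adj[OF u(1)] by blast
  obtain l1 where l1: "terminal V E u l1" "d n1 l1 + 1 = d u l1" "leg l1 u \<inter> W = {}"
    using branch n by blast
  obtain l2 where l2: "terminal V E u l2" "d n2 l2 + 1 = d u l2" "leg l2 u \<inter> W = {}"
    using branch n by blast
  have "l1 \<noteq> l2"
  proof
    assume "l1 = l2"
    moreover have "l1 \<in> V" using l1(1) terminal_leaf leaf_in_V by blast
    ultimately have "n1 = n2" using adj_closer_unique[OF n(1) n(2)] l1(2) l2(2) by fastforce
    then show False using n by blast
  qed
  then show False using g l1 l2 unfolding covers_legs_def by blast
qed

lemma terminal_on_side_if_no_major: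
  assumes ab: "E a b" and cb: "E c b" and ac: "a \<noteq> c"
    and na: "majors \<inter> side a b = {}" and nc: "majors \<inter> side c b = {}"
    and ex: "\<exists>u. major V E u"
  shows "\<exists>l. terminal V E b l \<and> l \<in> side a b \<and> leg l b \<subseteq> side a b"
proof -
  have V: "a \<in> V" "b \<in> V" "c \<in> V" using adj_in_V ab cb by auto
  obtain l where l: "l \<in> V" "between b a l" "leaf V E l"
    using exists_leaf_beyond[OF V(2) V(1)] ab adj_neq by blast
  have "d b a = 1" "d b l = d l b" "d a l = d l a" using dist_adj ab adj_sym dist_sym l(1) V by auto
  then have hl: "l \<in> side a b" using l(1,2) unfolding side_def by simp
  obtain u where tu: "terminal V E u l" using exists_terminal[OF l(3) ex] by blast
  have mu: "major V E u" using tu terminal_major by blast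
  have uV: "u \<in> V" using mu major_in_V by blast
  have ua: "u \<in> side b a" using side_cases[OF ab uV] na mu by blast
  have lbu: "between l b u" using dist_across_side[OF ab hl ua] hl unfolding side_def by simp
  have ueq: "u = b"
  proof (rule ccontr)
    assume ub: "u \<noteq> b"
    have nmb: "\<not> major V E b" using terminal_no_major_between[OF tu V(2) lbu] ub by blast
    obtain h where h: "E b h" "d h u + 1 = d b u" using exists_adj_closer[OF V(2) uV] ub by metis
    have "h = a \<or> h = c" using non_major_adj_cases[OF nmb _ _ ac h(1)] ab cb adj_sym by blast
    moreover have "u \<in> side h b" using h(2) dist_sym uV V h(1) adj_in_V unfolding side_def by auto
    moreover have "u \<in> side b c" using side_cases[OF cb uV] nc mu by blast
    ultimately show False using ua unfolding side_def by auto
  qed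
  have "v \<in> side a b" if v: "v \<in> leg l b" for v
  proof (rule ccontr)
    assume nv: "v \<notin> side a b"
    have vV: "v \<in> V" and bv: "between l v b" and vb: "v \<noteq> b" using v leg_iff by auto
    have "v \<in> side b a" using side_cases[OF ab vV] nv by blast
    then have "d l v = d l a + 1 + d b v" using dist_across_side[OF ab hl] by blast
    moreover have "d b v = d v b" using dist_sym vV V by auto
    moreover have "d l b = d l a + 1" using hl unfolding side_def by simp
    ultimately have "d b v = 0" using bv by linarith
    then show False using dist_pos V vV vb by metis
  qed
  then show ?thesis using tu ueq hl by blast
qed

lemma side_disjoint:
  assumes ab: "E a b" and cb: "E c b" and ac: "a \<noteq> c"
  shows "side a b \<inter> side c b = {}"
proof (rule ccontr)
  assume "side a b \<inter> side c b \<noteq> {}"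
  then obtain v where v: "v \<in> V" "d v b = d v a + 1" "d v b = d v c + 1" unfolding side_def by blast
  moreover have "d v a = d a v" "d v b = d b v" "d v c = d c v"
    using dist_sym v(1) adj_in_V ab cb by auto
  ultimately have "a = c" using adj_closer_unique[OF adj_sym[OF ab] adj_sym[OF cb] v(1)] by simp
  then show False using ac by blast
qed

lemma covers_legs_meets_side:
  assumes g: "covers_legs W" and ab: "E a b" and ex: "\<exists>u. major V E u"
  shows "W \<inter> side a b \<noteq> {} \<or> W \<inter> side b a \<noteq> {}"
  using no_major_on_side_if_covered[OF ab g] no_major_on_side_if_covered[OF adj_sym[OF ab] g]
    side_cases[OF ab] ex major_in_V by blast

lemma covers_legs_meets_sides_at_vertex:
  assumes g: "covers_legs W" and ab: "E a b" and cb: "E c b" and ac: "a \<noteq> c"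
    and ex: "\<exists>u. major V E u"
  shows "W \<inter> side a b \<noteq> {} \<or> W \<inter> side c b \<noteq> {}"
proof (rule ccontr)
  assume "\<not> ?thesis"
  then have Wa: "W \<inter> side a b = {}" and Wc: "W \<inter> side c b = {}" by auto
  have no_a: "majors \<inter> side a b = {}" and no_c: "majors \<inter> side c b = {}"
    using no_major_on_side_if_covered[OF ab g Wa] no_major_on_side_if_covered[OF cb g Wc] .
  obtain l1 where l1: "terminal V E b l1" "l1 \<in> side a b" "leg l1 b \<subseteq> side a b"
    using terminal_on_side_if_no_major[OF ab cb ac no_a no_c ex] by blast
  obtain l2 where l2: "terminal V E b l2" "l2 \<in> side c b" "leg l2 b \<subseteq> side c b"
    using terminal_on_side_if_no_major[OF cb ab ac[symmetric] no_c no_a ex] by blast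
  have "l1 \<noteq> l2" using l1(2) l2(2) side_disjoint[OF ab cb ac] by blast
  moreover have "leg l1 b \<inter> W = {}" "leg l2 b \<inter> W = {}" using l1(3) l2(3) Wa Wc by blast+
  ultimately show False using g l1(1) l2(1) unfolding covers_legs_def by blast
qed

lemma exists_middle_edge:
  assumes xV: "x \<in> V" "y \<in> V" "x \<noteq> y"
  shows "\<exists>a b. E a b \<and> x \<in> side a b \<and> y \<in> side b a \<and> d a x \<le> d b y \<and> d b y \<le> d a x + 1"
proof -
  define i where "i = (d x y + 1) div 2"
  have "d x y \<noteq> 0" using dist_pos xV by blast
  then have i: "1 \<le> i" "i \<le> d x y" "d x y \<le> 2 * i" "2 * i \<le> d x y + 1" unfolding i_def by auto
  then obtain b where b: "b \<in> V" "d x b = i" "d b y + i = d x y"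
    using exists_between_at_dist[OF xV(1,2)] by blast
  have "b \<noteq> x" using b i dist_self xV by auto
  then obtain a where a: "E b a" "d a x + 1 = d b x" using exists_adj_closer[OF b(1) xV(1)] by blast
  have aV: "a \<in> V" using adj_in_V a by auto
  have sy: "d a x = d x a" "d b x = d x b" "d a y = d y a" "d b y = d y b"
    using dist_sym aV b(1) xV by auto
  have "d a y \<le> d a b + d b y" "d x y \<le> d x a + d a y" using dist_triangle aV b(1) xV by auto
  moreover have "d a b = 1" using dist_adj a adj_sym by auto
  ultimately have "d y a = d y b + 1" using a b sy by linarith
  then have "E a b \<and> x \<in> side a b \<and> y \<in> side b a \<and> d a x \<le> d b y \<and> d b y \<le> d a x + 1"
    using a b sy i xV adj_sym unfolding side_def by auto
  then show ?thesis by blast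
qed

text \<open>Cut a geodesic from \<open>x\<close> to \<open>y\<close> at its middle edge \<open>a b\<close>, or at the two edges \<open>a b\<close>,
  \<open>c b\<close> around its middle vertex \<open>b\<close>: the side of \<open>a\<close> is closer to \<open>x\<close> and the other
  side closer to \<open>y\<close>, so a vertex of \<open>W\<close> there distinguishes \<open>x\<close> and \<open>y\<close>.\<close>
lemma resolving_if_covers_legs:
  assumes g: "covers_legs W" and ex: "\<exists>u. major V E u"
  shows "resolving V E W"
proof -
  have "\<exists>w\<in>W. d w x \<noteq> d w y" if xV: "x \<in> V" "y \<in> V" "x \<noteq> y" for x y
  proof -
    have dist_in: "\<exists>w\<in>W. d w x \<noteq> d w y" if "W \<inter> S \<noteq> {}" "\<And>v. v \<in> S \<Longrightarrow> d v x \<noteq> d v y" for S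
      using that by blast
    obtain a b where ab: "E a b" and x_side: "x \<in> side a b" and y_side: "y \<in> side b a"
      and le: "d a x \<le> d b y" "d b y \<le> d a x + 1"
      using exists_middle_edge[OF xV] by blast
    have a_side: "d v x \<noteq> d v y" if "v \<in> side a b" for v
      using closer_across_side[OF ab that y_side xV(1) le(1)] by simp
    show ?thesis
    proof (cases "d b y \<le> d a x")
      case True
      then have "d v x \<noteq> d v y" if "v \<in> side b a" for v
        using closer_across_side[OF adj_sym[OF ab] that x_side xV(2)] by simp
      then show ?thesis using dist_in a_side covers_legs_meets_side[OF g ab ex] by blast
    next
      case False
      have V: "a \<in> V" "b \<in> V" using adj_in_V ab by auto
      have "b \<noteq> y" using False dist_self V by auto
      then obtain c where c: "E b c" "d c y + 1 = d b y" using exists_adj_closer[OF V(2) xV(2)] by blast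
      have cb: "E c b" using c adj_sym by blast
      have "a \<noteq> c" using c y_side dist_sym V xV adj_in_V cb unfolding side_def by force
      moreover have "x \<in> side b c"
        using side_cases[OF cb xV(1)] side_disjoint[OF ab cb \<open>a \<noteq> c\<close>] x_side by blast
      moreover have "d c y \<le> d b x" using c le False x_side dist_sym V xV unfolding side_def by auto
      ultimately have "d v x \<noteq> d v y" if "v \<in> side c b" for v
        using closer_across_side[OF cb that] xV(2) by fastforce
      then show ?thesis
        using dist_in a_side covers_legs_meets_sides_at_vertex[OF g ab cb \<open>a \<noteq> c\<close> ex] by blast
    qed
  qed
  then show ?thesis using g unfolding resolving_def covers_legs_def by blast
qed

lemma covers_legs_choice:
  assumes f: "\<And>x u. terminal V E u x \<Longrightarrow> f x \<in> leg x u"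
    and t: "\<And>u. terminals u \<noteq> {} \<Longrightarrow> terminal V E u (t u)"
  defines "W \<equiv> {f x | x. \<exists>u. terminal V E u x \<and> x \<noteq> t u}"
  shows "covers_legs W \<and> card W \<le> terminal_excess"
proof -
  have "W \<subseteq> V" using f unfolding W_def leg_def by blast
  moreover have "leg x u \<inter> W \<noteq> {} \<or> leg y u \<inter> W \<noteq> {}"
    if tx: "terminal V E u x" and ty: "terminal V E u y" and xy: "x \<noteq> y" for u x y
  proof (cases "x = t u")
    case True
    then have "f y \<in> W" unfolding W_def using ty xy by blast
    then show ?thesis using f[OF ty] by blast
  next
    case False
    then have "f x \<in> W" unfolding W_def using tx by blast
    then show ?thesis using f[OF tx] by blast
  qed
  ultimately have g: "covers_legs W" unfolding covers_legs_def by blast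
  have "W = f ` (\<Union>u\<in>majors. terminals u - {t u})"
    unfolding W_def using terminal_major by blast
  then have "card W \<le> card (\<Union>u\<in>majors. terminals u - {t u})"
    using card_image_le[of _ f] finite_majors finite_terminals by simp
  also have "\<dots> \<le> (\<Sum>u\<in>majors. card (terminals u - {t u}))" by (rule card_UN_le[OF finite_majors])
  also have "\<dots> \<le> terminal_excess"
    unfolding terminal_excess_def ter_def
  proof (intro sum_mono)
    fix u
    show "card (terminals u - {t u}) \<le> card (terminals u) - 1"
      using t[of u] by (cases "terminals u = {}") (simp_all add: card_Diff_singleton)
  qed
  finally show ?thesis using g by blast
qed

theorem metric_dim_eq_terminal_excess:
  assumes ex: "\<exists>u. major V E u"
  shows "metric_dim V E = terminal_excess"
proof -
  define t where "t u = (SOME x. terminal V E u x)" for u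
  have t: "terminal V E u (t u)" if "terminals u \<noteq> {}" for u
    using that someI_ex[of "terminal V E u"] unfolding t_def by blast
  have "covers_legs {x | x. \<exists>u. terminal V E u x \<and> x \<noteq> t u}"
    and card_le: "card {x | x. \<exists>u. terminal V E u x \<and> x \<noteq> t u} \<le> terminal_excess"
    using covers_legs_choice[of "\<lambda>x. x" t] leaf_in_leg t by auto
  then have "metric_dim V E \<le> terminal_excess"
    using metric_dim_le resolving_if_covers_legs[OF _ ex] le_trans by blast
  moreover obtain S where "resolving V E S" "card S = metric_dim V E"
    using metric_dim_witness by blast
  then have "terminal_excess \<le> metric_dim V E" using terminal_excess_le_resolving by metis
  ultimately show ?thesis by simp
qed

section \<open>Leaves at strong support vertices\<close>

abbreviation leaves_at where "leaves_at s \<equiv> {x. leaf V E x \<and> E s x}"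

lemma finite_leaves_at: "finite (leaves_at s)"
  by (rule finite_subset[OF _ finite_V]) (auto dest: leaf_in_V)

lemma leaves_at_disjoint: "s \<noteq> s' \<Longrightarrow> leaves_at s \<inter> leaves_at s' = {}"
  using leaf_adj_unique adj_sym by blast

lemma leaves_at_subset_terminals:
  assumes mu: "major V E s"
  shows "leaves_at s \<subseteq> terminals s"
proof
  fix x assume "x \<in> leaves_at s"
  then have lx: "leaf V E x" and ex: "E s x" by auto
  have "\<not> major V E v" if "v \<in> V" "between x v s" "v \<noteq> s" for v
  proof -
    have "d x s = 1" using dist_adj ex adj_sym by auto
    moreover have "d v s \<noteq> 0" using dist_pos that major_in_V mu by blast
    ultimately have "v = x" using dist_eq_0D leaf_in_V lx that by fastforce
    then show ?thesis using leaf_not_major lx by blast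
  qed
  then show "x \<in> terminals s" using terminalI[OF lx mu] by blast
qed

lemma card_leaves_at_le_ter: "major V E s \<Longrightarrow> card (leaves_at s) \<le> ter V E s"
  unfolding ter_def using card_mono[OF finite_terminals leaves_at_subset_terminals] .

lemma dist_via_support:
  assumes l: "leaf V E l" "E s l" and wV: "w \<in> V" and wl: "w \<noteq> l"
  shows "d w l = d w s + 1"
proof -
  have lV: "l \<in> V" and sV: "s \<in> V" using l leaf_in_V adj_in_V by blast+
  obtain h where h: "E l h" "d h w + 1 = d l w" using exists_adj_closer[OF lV wV] wl by metis
  have "h = s" using leaf_adj_unique[OF l(1) h(1)] l(2) adj_sym by blast
  then show ?thesis using h dist_sym sV lV wV by simp
qed

text \<open>Leaves at a common support are twins: only they themselves distinguish them.\<close>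
lemma card_leaves_at_diff_resolving:
  assumes res: "resolving V E S"
  shows "card (leaves_at s - S) \<le> 1"
proof (rule ccontr)
  assume "\<not> ?thesis"
  then have "finite (leaves_at s - S)" "card (leaves_at s - S) \<ge> 2"
    using finite_leaves_at by simp_all
  then obtain l1 l2 where l: "l1 \<in> leaves_at s - S" "l2 \<in> leaves_at s - S" "l1 \<noteq> l2"
    by (rule card_ge_2_obtain)
  have lV: "l1 \<in> V" "l2 \<in> V" using l leaf_in_V by blast+
  obtain w where w: "w \<in> S" "d w l1 \<noteq> d w l2" using res[unfolded resolving_def] lV l(3) by blast
  have "w \<in> V" using res w unfolding resolving_def by blast
  moreover have "l1 \<noteq> w" "l2 \<noteq> w" "leaf V E l1" "leaf V E l2" "E s l1" "E s l2"
    using l w by auto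
  ultimately show False using w(2) dist_via_support by metis
qed

lemma leaves_at_subset_dominating:
  assumes dom: "dominating V E S" and s: "s \<notin> S"
  shows "leaves_at s \<subseteq> S"
proof
  fix l assume l: "l \<in> leaves_at s"
  show "l \<in> S"
  proof (rule ccontr)
    assume "l \<notin> S"
    then obtain w where "w \<in> S" "E l w" using dom leaf_in_V l unfolding dominating_def by blast
    moreover have "E l s" using l adj_sym by blast
    ultimately show False using leaf_adj_unique l s by blast
  qed
qed

end

locale nonpath_tree = tree_graph +
  assumes not_path: "\<not> is_path_graph V E"
begin

lemma exists_major_vertex: "\<exists>u. major V E u" using exists_major not_path by blast

abbreviation SS where "SS \<equiv> strong_supports V E"

lemma strong_supports_subset_majors: "SS \<subseteq> majors"
  using strong_support_major not_path unfolding strong_supports_def by blast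

lemma finite_strong_supports: "finite SS"
  using finite_subset[OF strong_supports_subset_majors finite_majors] .

lemma card_leaves_at_strong_support: "s \<in> SS \<Longrightarrow> card (leaves_at s) \<ge> 2"
  unfolding strong_supports_def strong_support_def by blast

lemma ell'_eq_sum: "ell' V E = (\<Sum>s\<in>SS. card (leaves_at s))"
proof -
  have "{x. leaf V E x \<and> (\<exists>s. strong_support V E s \<and> E s x)} = (\<Union>s\<in>SS. leaves_at s)"
    unfolding strong_supports_def by blast
  moreover have "card (\<Union>s\<in>SS. leaves_at s) = (\<Sum>s\<in>SS. card (leaves_at s))"
    by (rule card_UN_disjoint[OF finite_strong_supports]) (use finite_leaves_at leaves_at_disjoint in auto)
  ultimately show ?thesis unfolding ell'_def by simp
qed

lemma ell'_diff_eq_sum: "ell' V E - card SS = (\<Sum>s\<in>SS. card (leaves_at s) - 1)"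
proof -
  have "(\<Sum>s\<in>SS. card (leaves_at s) - 1) + card SS = (\<Sum>s\<in>SS. card (leaves_at s) - 1 + 1)"
    unfolding sum.distrib by simp
  also have "\<dots> = ell' V E"
    unfolding ell'_eq_sum
  proof (intro sum.cong refl)
    fix s assume "s \<in> SS"
    then show "card (leaves_at s) - 1 + 1 = card (leaves_at s)"
      using card_leaves_at_strong_support by fastforce
  qed
  finally show ?thesis by linarith
qed

text \<open>A major vertex that is not a strong support has at most one leaf, so it contributes
  nothing to the sum.\<close>
lemma ell'_diff_eq_sum_majors: "ell' V E - card SS = (\<Sum>u\<in>majors. card (leaves_at u) - 1)"
proof -
  have "(\<Sum>u\<in>majors. card (leaves_at u) - 1) = (\<Sum>u\<in>SS. card (leaves_at u) - 1)"
  proof (rule sum.mono_neutral_right[OF finite_majors strong_supports_subset_majors])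
    show "\<forall>u\<in>majors - SS. card (leaves_at u) - 1 = 0"
      unfolding strong_supports_def strong_support_def using major_in_V by (auto simp: not_le)
  qed
  then show ?thesis using ell'_diff_eq_sum by simp
qed

abbreviation all_terminals_adjacent where
  "all_terminals_adjacent \<equiv> (\<forall>u. exterior_major V E u \<and> ter V E u \<ge> 2 \<longrightarrow>
      (\<forall>x. terminal V E u x \<longrightarrow> E u x))"

abbreviation long_leaf_paths_two_majors where
  "long_leaf_paths_two_majors \<equiv> (\<forall>x y p. leaf V E x \<and> leaf V E y \<and> d x y > 2 \<and>
      path_between V E x y p \<longrightarrow> card {v \<in> set p. major V E v} \<ge> 2)"

lemma terminals_adjacent_iff_card_eq:
  assumes mu: "major V E u"
  shows "(ter V E u \<ge> 2 \<longrightarrow> (\<forall>x. terminal V E u x \<longrightarrow> E u x))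
    \<longleftrightarrow> card (leaves_at u) - 1 = ter V E u - 1"
proof
  assume adj: "ter V E u \<ge> 2 \<longrightarrow> (\<forall>x. terminal V E u x \<longrightarrow> E u x)"
  show "card (leaves_at u) - 1 = ter V E u - 1"
  proof (cases "ter V E u \<ge> 2")
    case True
    then have "terminals u \<subseteq> leaves_at u" using adj terminal_leaf by blast
    then have "leaves_at u = terminals u" using leaves_at_subset_terminals[OF mu] by blast
    then show ?thesis unfolding ter_def by simp
  next
    case False
    then show ?thesis using card_leaves_at_le_ter[OF mu] by simp
  qed
next
  assume eq: "card (leaves_at u) - 1 = ter V E u - 1"
  show "ter V E u \<ge> 2 \<longrightarrow> (\<forall>x. terminal V E u x \<longrightarrow> E u x)"
  proof (intro impI)
    assume "ter V E u \<ge> 2"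
    then have "card (leaves_at u) = card (terminals u)" using eq unfolding ter_def by simp
    then have "leaves_at u = terminals u"
      using card_subset_eq[OF finite_terminals leaves_at_subset_terminals[OF mu]] by simp
    then show "\<forall>x. terminal V E u x \<longrightarrow> E u x" by blast
  qed
qed

theorem metric_dim_eq_ell'_diff_iff:
  "metric_dim V E = ell' V E - card SS \<longleftrightarrow> all_terminals_adjacent"
proof -
  have le: "card (leaves_at u) - 1 \<le> ter V E u - 1" if "u \<in> majors" for u
    using card_leaves_at_le_ter that by (simp add: diff_le_mono)
  have "metric_dim V E = ell' V E - card SS
      \<longleftrightarrow> (\<Sum>u\<in>majors. card (leaves_at u) - 1) = (\<Sum>u\<in>majors. ter V E u - 1)"
    using metric_dim_eq_terminal_excess[OF exists_major_vertex] ell'_diff_eq_sum_majors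
    unfolding terminal_excess_def by auto
  also have "\<dots> \<longleftrightarrow> (\<forall>u\<in>majors. card (leaves_at u) - 1 = ter V E u - 1)"
    using sum_mono_inv[OF _ le _ finite_majors] by (auto intro: sum.cong)
  also have "\<dots> \<longleftrightarrow> all_terminals_adjacent"
    using terminals_adjacent_iff_card_eq unfolding exterior_major_def by auto
  finally show ?thesis .
qed

lemma terminal_on_leaf_path:
  assumes tu: "terminal V E u x" and ly: "leaf V E y" "y \<noteq> x"
    and p: "path_between V E x y p \<or> path_between V E y x p"
  shows "u \<in> set p"
proof -
  have "x \<in> V" "y \<in> V" "u \<in> V" using tu ly terminal_leaf terminal_major leaf_in_V major_in_V by blast+
  then have "between y u x" using terminal_between_leaves[OF tu ly] dist_sym by simp
  then show ?thesis
    using terminal_between_leaves[OF tu ly] set_path_between p terminal_major[OF tu] major_in_V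
    by blast
qed

lemma majors_on_path_between_terminals:
  assumes tx: "terminal V E u x" and ty: "terminal V E u y" and xy: "x \<noteq> y"
    and p: "path_between V E x y p"
  shows "{v \<in> set p. major V E v} = {u}"
proof -
  have V: "x \<in> V" "y \<in> V" "u \<in> V" using tx ty terminal_leaf terminal_major leaf_in_V major_in_V by blast+
  have b: "between x u y" using terminal_between_leaves[OF tx terminal_leaf[OF ty]] xy by blast
  have "v = u" if v: "v \<in> set p" "major V E v" for v
  proof (rule ccontr)
    assume vu: "v \<noteq> u"
    have vV: "v \<in> V" using v major_in_V by blast
    have "\<not> (between x v u \<and> v \<noteq> u)" "\<not> (between y v u \<and> v \<noteq> u)"
      using terminal_no_major_between[OF tx vV] terminal_no_major_between[OF ty vV] v(2) by blast+
    then have "between x u v" "between y u v"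
      using terminal_between[OF tx vV _ V(3)] terminal_between[OF ty vV _ V(3)] dist_self V by simp_all
    moreover have "between x v y" using set_path_between[OF p] v(1) by blast
    moreover have "d v y = d y v" "d y u = d u y" using dist_sym vV V by auto
    moreover have "d u v \<noteq> 0" using dist_pos vV V vu by metis
    ultimately show False using b by linarith
  qed
  moreover have "u \<in> set p" using terminal_on_leaf_path[OF tx terminal_leaf[OF ty]] p xy by blast
  ultimately show ?thesis using terminal_major[OF tx] by blast
qed

lemma long_leaf_paths_two_majors_if_terminals_adjacent:
  assumes adj: all_terminals_adjacent
  shows long_leaf_paths_two_majors
proof (intro allI impI)
  fix x y p
  assume "leaf V E x \<and> leaf V E y \<and> d x y > 2 \<and> path_between V E x y p"
  then have lx: "leaf V E x" and ly: "leaf V E y" and dxy: "d x y > 2" and p: "path_between V E x y p"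
    by auto
  have V: "x \<in> V" "y \<in> V" using lx ly leaf_in_V by blast+
  have xy: "x \<noteq> y" using dxy dist_self V by auto
  obtain u where tu: "terminal V E u x" using exists_terminal[OF lx exists_major_vertex] by blast
  obtain u' where tu': "terminal V E u' y" using exists_terminal[OF ly exists_major_vertex] by blast
  have fin: "finite {v \<in> set p. major V E v}" by simp
  show "card {v \<in> set p. major V E v} \<ge> 2"
  proof (cases "u = u'")
    case False
    have "{u, u'} \<subseteq> {v \<in> set p. major V E v}"
      using terminal_on_leaf_path[OF tu ly] terminal_on_leaf_path[OF tu' lx] p xy tu tu'
        terminal_major by auto
    then have "card {u, u'} \<le> card {v \<in> set p. major V E v}" by (rule card_mono[OF fin])
    then show ?thesis using False by simp
  next
    case True
    then have "{x, y} \<subseteq> terminals u" using tu tu' by blast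
    then have "card {x, y} \<le> ter V E u" unfolding ter_def by (rule card_mono[OF finite_terminals])
    then have "ter V E u \<ge> 2" using xy by simp
    then have "E u x" "E u y"
      using adj tu tu' True terminal_major unfolding exterior_major_def by auto
    then have "d x u = 1" "d u y = 1" using dist_adj adj_sym by auto
    moreover have "u \<in> V" using tu terminal_major major_in_V by blast
    then have "d x y \<le> d x u + d u y" using dist_triangle V by blast
    ultimately have "d x y \<le> 2" by simp
    then show ?thesis using dxy by simp
  qed
qed

lemma terminals_adjacent_if_long_leaf_paths_two_majors:
  assumes two: long_leaf_paths_two_majors
  shows all_terminals_adjacent
proof (rule ccontr)
  assume "\<not> all_terminals_adjacent"
  then obtain u x where u: "major V E u" "ter V E u \<ge> 2" and tx: "terminal V E u x" and nux: "\<not> E u x"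
    unfolding exterior_major_def by blast
  have "card (terminals u - {x}) \<ge> 1" using u(2) tx unfolding ter_def by (simp add: card_Diff_singleton)
  then have "terminals u - {x} \<noteq> {}" by (metis card.empty not_one_le_zero)
  then obtain y where ty: "terminal V E u y" and xy: "x \<noteq> y" by blast
  have lx: "leaf V E x" and ly: "leaf V E y" using tx ty terminal_leaf by blast+
  have V: "x \<in> V" "y \<in> V" "u \<in> V" using lx ly u leaf_in_V major_in_V by blast+
  have ux: "u \<noteq> x" "u \<noteq> y" using lx ly u leaf_not_major by blast+
  have "d x u \<noteq> 0" "d u y \<noteq> 0" using dist_pos V ux by metis+
  moreover have "d x u \<noteq> 1" using adj_if_dist_eq_1 V nux adj_sym by blast
  moreover have "between x u y" using terminal_between_leaves[OF tx ly] xy by blast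
  ultimately have dxy: "d x y > 2" by linarith
  obtain p where p: "path_between V E x y p" using geodesic_path_exists V by blast
  then have "card {v \<in> set p. major V E v} = 1"
    using majors_on_path_between_terminals[OF tx ty xy] by simp
  moreover have "card {v \<in> set p. major V E v} \<ge> 2" using two lx ly dxy p by blast
  ultimately show False by simp
qed

lemma card_leaves_at_in_mld_set:
  assumes res: "resolving V E S" and dom: "dominating V E S" and s: "s \<in> SS"
  shows "card (leaves_at s) - 1 + (if s \<in> S then 0 else 1) \<le> card (leaves_at s \<inter> S)"
proof (cases "s \<in> S")
  case True
  have "card (leaves_at s) = card ((leaves_at s \<inter> S) \<union> (leaves_at s - S))"
    by (rule arg_cong[where f = card]) blast
  also have "\<dots> \<le> card (leaves_at s \<inter> S) + card (leaves_at s - S)" by (rule card_Un_le)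
  finally show ?thesis using True card_leaves_at_diff_resolving[OF res, of s] by simp
next
  case False
  then have "leaves_at s \<inter> S = leaves_at s" using leaves_at_subset_dominating[OF dom] by blast
  then show ?thesis using False card_leaves_at_strong_support[OF s] by simp
qed

lemma dominating_swap_support_leaves:
  assumes dom: "dominating V E S"
  defines "L \<equiv> \<Union>s\<in>SS. leaves_at s"
  shows "dominating V E ((S - L) \<union> (SS - S))"
proof -
  have SV: "S \<subseteq> V" using dom unfolding dominating_def by blast
  have SSV: "SS \<subseteq> V" using strong_supports_subset_majors major_in_V by blast
  have nL: "s \<notin> L" if "s \<in> SS" for s
    using that strong_supports_subset_majors leaf_not_major unfolding L_def by blast
  have "\<exists>u\<in>(S - L) \<union> (SS - S). E x u" if xV: "x \<in> V" and xS: "x \<notin> (S - L) \<union> (SS - S)" for x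
  proof (cases "x \<in> L")
    case True
    then obtain s where s: "s \<in> SS" "x \<in> leaves_at s" unfolding L_def by blast
    then have "s \<in> (S - L) \<union> (SS - S)" using nL by blast
    moreover have "E x s" using s(2) adj_sym by blast
    ultimately show ?thesis by blast
  next
    case False
    then have "x \<notin> S" using xS by blast
    then obtain w where w: "w \<in> S" "E x w" using dom xV unfolding dominating_def by blast
    show ?thesis
    proof (cases "w \<in> L")
      case True
      then obtain s where s: "s \<in> SS" "w \<in> leaves_at s" unfolding L_def by blast
      then have "x = s" using leaf_adj_unique w(2) adj_sym by blast
      then show ?thesis using s(1) \<open>x \<notin> S\<close> xS by blast
    next
      case False
      then show ?thesis using w by blast
    qed
  qed
  then show ?thesis unfolding dominating_def using SV SSV by blast
qed

text \<open>Every MLD-set contains all but at most one leaf at each strong support, and all of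
  them if it misses the support; trading those leaves for their supports leaves a
  dominating set.\<close>
lemma domination_number_plus_ell'_diff_le:
  assumes res: "resolving V E S" and dom: "dominating V E S"
  shows "domination_number V E + (ell' V E - card SS) \<le> card S"
proof -
  have finS: "finite S" using res finite_subset[OF _ finite_V] unfolding resolving_def by blast
  define L where "L = (\<Union>s\<in>SS. leaves_at s)"
  have "card (\<Union>s\<in>SS. leaves_at s \<inter> S) = (\<Sum>s\<in>SS. card (leaves_at s \<inter> S))"
    by (rule card_UN_disjoint[OF finite_strong_supports]) (use finite_leaves_at leaves_at_disjoint in auto)
  moreover have "S \<inter> L = (\<Union>s\<in>SS. leaves_at s \<inter> S)" unfolding L_def by blast
  ultimately have "card (S \<inter> L) = (\<Sum>s\<in>SS. card (leaves_at s \<inter> S))" by simp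
  also have "\<dots> \<ge> (\<Sum>s\<in>SS. card (leaves_at s) - 1 + (if s \<in> S then 0 else 1))"
    using card_leaves_at_in_mld_set[OF res dom] by (intro sum_mono) auto
  moreover have "(\<Sum>s\<in>SS. card (leaves_at s) - 1 + (if s \<in> S then 0 else 1))
      = (ell' V E - card SS) + card (SS - S)"
    using finite_strong_supports
    by (simp add: sum.distrib ell'_diff_eq_sum sum.If_cases Diff_eq)
  ultimately have "(ell' V E - card SS) + card (SS - S) \<le> card (S \<inter> L)" by simp
  moreover have "card S = card (S - L) + card (S \<inter> L)"
    using card_Diff_subset_Int finS card_Int_Diff[OF finS, of L] by (simp add: Int_commute)
  moreover have "domination_number V E \<le> card (S - L) + card (SS - S)"
    using domination_number_le[OF dominating_swap_support_leaves[OF dom]] card_Un_le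
      le_trans unfolding L_def by blast
  ultimately show ?thesis by linarith
qed

text \<open>A metric basis may omit the terminal vertex \<open>x'\<close> and represent the leg of \<open>x\<close> by any
  of its vertices.\<close>
lemma exists_metric_basis_containing_leg_vertex:
  assumes tx: "terminal V E u x" and tx': "terminal V E u x'" and xx': "x \<noteq> x'"
    and v: "v \<in> leg x u"
  shows "\<exists>W. resolving V E W \<and> card W \<le> metric_dim V E \<and> v \<in> W"
proof -
  define t where "t = (\<lambda>w. SOME z. terminal V E w z)(u := x')"
  define f where "f z = (if z = x then v else z)" for z
  have f: "f z \<in> leg z w" if tz: "terminal V E w z" for z w
  proof (cases "z = x")
    case True
    then have "w = u" using terminal_unique tz tx by blast
    then show ?thesis using True v unfolding f_def by simp
  next
    case False
    then show ?thesis using leaf_in_leg[OF tz] unfolding f_def by simp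
  qed
  have t: "terminal V E w (t w)" if "terminals w \<noteq> {}" for w
    using tx' that someI_ex[of "terminal V E w"] unfolding t_def by auto
  define W where "W = {f z | z. \<exists>w. terminal V E w z \<and> z \<noteq> t w}"
  have "covers_legs W" "card W \<le> terminal_excess"
    using covers_legs_choice[of f t, OF f t] unfolding W_def by auto
  moreover have "f x \<in> W" using tx xx' unfolding W_def t_def by auto
  then have "v \<in> W" unfolding f_def by simp
  ultimately show ?thesis
    using resolving_if_covers_legs[OF _ exists_major_vertex]
      metric_dim_eq_terminal_excess[OF exists_major_vertex] by auto
qed

lemma exists_min_dominating_containing_support:
  assumes lx: "leaf V E x" and xy: "E x y"
  shows "\<exists>D. dominating V E D \<and> card D \<le> domination_number V E \<and> y \<in> D"
proof -
  obtain D where D: "dominating V E D" "card D = domination_number V E"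
    using domination_number_witness by blast
  have DV: "D \<subseteq> V" using D(1) unfolding dominating_def by blast
  have finD: "finite D" using finite_subset[OF DV finite_V] .
  define D' where "D' = insert y (D - {x})"
  have "\<exists>w\<in>D'. E v w" if vV: "v \<in> V" and vD: "v \<notin> D'" for v
  proof (cases "v = x")
    case True then show ?thesis using xy unfolding D'_def by blast
  next
    case False
    then obtain w where w: "w \<in> D" "E v w" using D(1) vV vD unfolding dominating_def D'_def by blast
    have "w \<noteq> x" using leaf_adj_unique[OF lx _ xy] w(2) adj_sym vD unfolding D'_def by blast
    then show ?thesis using w unfolding D'_def by blast
  qed
  then have "dominating V E D'" unfolding dominating_def D'_def using DV xy adj_in_V by blast
  moreover have "card D' \<le> card D"
  proof (cases "x \<in> D")
    case True
    have "card D' \<le> Suc (card (D - {x}))" unfolding D'_def using finD by (simp add: card_insert_if)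
    also have "\<dots> = card D"
      using True finD by (metis card_Suc_Diff1)
    finally show ?thesis .
  next
    case False
    then obtain w where "w \<in> D" "E x w" using D(1) lx leaf_in_V unfolding dominating_def by blast
    then have "D' = D" using leaf_adj_unique[OF lx _ xy] False unfolding D'_def by blast
    then show ?thesis by simp
  qed
  ultimately show ?thesis using D(2) unfolding D'_def by auto
qed

text \<open>If a terminal vertex \<open>x\<close> is not adjacent to its major vertex, its neighbour lies on its
  leg, so a metric basis and a minimum dominating set can be chosen to share it.\<close>
lemma mld_number_less_if_not_terminals_adjacent:
  assumes "\<not> all_terminals_adjacent"
  shows "mld_number V E < metric_dim V E + domination_number V E"
proof -
  obtain u x where u: "ter V E u \<ge> 2" and tx: "terminal V E u x" and nux: "\<not> E u x"
    using assms by blast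
  have lx: "leaf V E x" and mu: "major V E u" using tx terminal_leaf terminal_major by blast+
  have V: "x \<in> V" "u \<in> V" using lx mu leaf_in_V major_in_V by blast+
  obtain y where xy: "E x y" using leaf_has_adj[OF lx] by blast
  have yV: "y \<in> V" using adj_in_V xy by blast
  have "x \<noteq> u" using lx mu leaf_not_major by blast
  then obtain n where n: "E x n" "d n u + 1 = d x u" using exists_adj_closer[OF V] by blast
  then have "d y u + 1 = d x u" using leaf_adj_unique[OF lx n(1) xy] by simp
  then have "between x y u" using dist_adj xy by simp
  moreover have "y \<noteq> u" using xy nux adj_sym by blast
  ultimately have yleg: "y \<in> leg x u" using leg_iff yV by blast
  have "card (terminals u - {x}) \<ge> 1" using u tx unfolding ter_def by (simp add: card_Diff_singleton)
  then have "terminals u - {x} \<noteq> {}" by (metis card.empty not_one_le_zero)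
  then obtain x' where tx': "terminal V E u x'" and xx': "x \<noteq> x'" by blast
  obtain W where W: "resolving V E W" "card W \<le> metric_dim V E" "y \<in> W"
    using exists_metric_basis_containing_leg_vertex[OF tx tx' xx' yleg] by blast
  obtain D where D: "dominating V E D" "card D \<le> domination_number V E" "y \<in> D"
    using exists_min_dominating_containing_support[OF lx xy] by blast
  have WV: "W \<subseteq> V" and DV: "D \<subseteq> V" using W(1) D(1) unfolding resolving_def dominating_def by auto
  then have fin: "finite W" "finite D" using finite_subset[OF _ finite_V] by blast+
  have "resolving V E (W \<union> D)" "dominating V E (W \<union> D)"
    using resolving_mono[OF W(1)] dominating_mono[OF D(1)] WV DV by auto
  then have "mld_number V E \<le> card (W \<union> D)" by (rule mld_number_le)
  moreover have "card (W \<union> D) + card (W \<inter> D) = card W + card D" using card_Un_Int[OF fin] by simp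
  moreover have "W \<inter> D \<noteq> {}" using W(3) D(3) by blast
  then have "card (W \<inter> D) \<ge> 1" using fin by (simp add: Suc_le_eq card_gt_0_iff)
  ultimately show ?thesis using W(2) D(2) by linarith
qed

theorem mld_number_eq_sum_iff:
  "mld_number V E = metric_dim V E + domination_number V E \<longleftrightarrow> all_terminals_adjacent"
proof
  assume "mld_number V E = metric_dim V E + domination_number V E"
  then show all_terminals_adjacent using mld_number_less_if_not_terminals_adjacent by fastforce
next
  assume all_terminals_adjacent
  then have "metric_dim V E = ell' V E - card SS" using metric_dim_eq_ell'_diff_iff by blast
  moreover obtain S where "resolving V E S" "dominating V E S" "card S = mld_number V E"
    using mld_number_witness by blast
  ultimately have "metric_dim V E + domination_number V E \<le> mld_number V E"
    using domination_number_plus_ell'_diff_le by fastforce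
  then show "mld_number V E = metric_dim V E + domination_number V E"
    using mld_number_le_sum by simp
qed

end

theorem theorem3:
  fixes V :: "'a set" and E :: "'a \<Rightarrow> 'a \<Rightarrow> bool"
  assumes "tree V E" and "\<not> is_path_graph V E"
  defines "C1 \<equiv> (mld_number V E = metric_dim V E + domination_number V E)"
      and "C2 \<equiv> (metric_dim V E = ell' V E - card (strong_supports V E))"
      and "C3 \<equiv> (\<forall>u. exterior_major V E u \<and> ter V E u \<ge> 2 \<longrightarrow>
                    (\<forall>x. terminal V E u x \<longrightarrow> E u x))"
      and "C4 \<equiv> (\<forall>x y p. leaf V E x \<and> leaf V E y \<and> dist V E x y > 2 \<and>
                    path_between V E x y p \<longrightarrow> card {v \<in> set p. major V E v} \<ge> 2)"
  shows "(C1 \<longleftrightarrow> C2) \<and> (C2 \<longleftrightarrow> C3) \<and> (C3 \<longleftrightarrow> C4)"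
proof -
  interpret nonpath_tree V E
    using assms(1,2) unfolding tree_def by unfold_locales blast+
  have "C1 \<longleftrightarrow> C3" unfolding C1_def C3_def by (rule mld_number_eq_sum_iff)
  moreover have "C2 \<longleftrightarrow> C3" unfolding C2_def C3_def by (rule metric_dim_eq_ell'_diff_iff)
  moreover have "C3 \<longleftrightarrow> C4" unfolding C3_def C4_def
    using long_leaf_paths_two_majors_if_terminals_adjacent
      terminals_adjacent_if_long_leaf_paths_two_majors by blast
  ultimately show ?thesis by blast
qed

end
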